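(* Let $V$ be a complex vector space of dimension $2n$ with a non-degenerate skew form and $W$ a complex vector space of dimension $g$, and let $\rho$ denote the representation of $\mathrm{Sp}(g)=\mathrm{Sp}(W\oplus W^* )$ on $\Lambda(V\otimes W)$ described in the context, restricted to the subgroup $\mathrm{GL}(W^* )\subset\mathrm{Sp}(g)$. Let $\rho_0$ be the natural representation of $\mathrm{GL}(W^* )$ on $\Lambda(V\otimes W)$, in which $M\in\mathrm{GL}(W^* )$ acts on $V\otimes W$ by $\mathrm{Id}_V\otimes(M^T)^{-1}$ (extended multiplicatively to the exterior algebra). Then for every $M\in\mathrm{GL}(W^* )$, $$\rho(M)=(\det M)^n\rho_0(M).$$
   Context: $W\oplus W^*$ carries the symplectic form $\alpha((w_1,w_1^* ),(w_2,w_2^* ))=w_2^*(w_1)-w_1^*(w_2)$; $\mathrm{GL}(W^* )$ embeds in $\mathrm{Sp}(W\oplus W^*,\alpha)$ by letting $M$ act on $W^*$ as $M$ and on $W$ as $(M^T)^{-1}$ (the inverse of the dual map). With $\varepsilon$ the skew form on $V$, $h=\varepsilon\otimes\alpha$ is a non-degenerate symmetric form on $H=V\otimes(W\oplus W^* )$, $F=V\otimes W$ is maximal isotropic and $H=F\oplus F^*$. The spin representation of $\mathfrak{o}(H,h)$ on $\Lambda F$ is $X\mapsto\frac12\sum_a[(Xe_a)\tilde e^a+(X\tilde e^a)e_a]$, computed in the Clifford algebra of $Q(v)=h(v,v)/2$ acting on $\Lambda F$ with $F$ acting by exterior multiplication and $F^*$ by contraction ($e_a$ basis of $F$, $\tilde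 e^a$ dual basis). Restricting to $\mathfrak{sp}(W\oplus W^* )\subset\mathfrak{o}(H,h)$ and integrating gives $\rho$. *)

theory Defs
  imports "HOL-Analysis.Analysis" "Jordan_Normal_Form.Determinant"
begin

(* Conventions:
   V = C^(2n) with basis v_0..v_(2n-1), skew form eps(v_i,v_j) = E$$(i,j);
   W = C^g with basis w_0..w_(g-1), W* with dual basis w^0..w^(g-1).
   W (+) W* has ordered basis u_p (p < 2g): u_p = w_p (p<g), u_(g+k) = w^k.
   F = V (x) W has basis e_a = v_(a div g) (x) w_(a mod g), a < N = 2ng.
   Lambda F has basis e_S = e_(s1) ^ ... ^ e_(sk), S = {s1<...<sk} subset of {..<N}.
   Vectors of Lambda F : nat set => complex (coefficients on Pow {..<N});
   operators on Lambda F : matrices  nat set => nat set => complex,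
   entry P S T = coefficient of e_S in P(e_T). *)

definition inv_mat :: "complex mat \<Rightarrow> complex mat" where
  "inv_mat A = (SOME B. B \<in> carrier_mat (dim_row A) (dim_row A) \<and>
                        A * B = 1\<^sub>m (dim_row A) \<and> B * A = 1\<^sub>m (dim_row A))"

definition op_comp :: "nat \<Rightarrow> (nat set \<Rightarrow> nat set \<Rightarrow> complex) \<Rightarrow> (nat set \<Rightarrow> nat set \<Rightarrow> complex)
                       \<Rightarrow> nat set \<Rightarrow> nat set \<Rightarrow> complex" where
  "op_comp N P Q = (\<lambda>S T. \<Sum>U\<in>Pow {..<N}. P S U * Q U T)"

definition op_app :: "nat \<Rightarrow> (nat set \<Rightarrow> nat set \<Rightarrow> complex) \<Rightarrow> (nat set \<Rightarrow> complex)
                       \<Rightarrow> nat set \<Rightarrow> complex" where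
  "op_app N P x = (\<lambda>S. \<Sum>U\<in>Pow {..<N}. P S U * x U)"

definition wedge_op :: "nat \<Rightarrow> nat set \<Rightarrow> nat set \<Rightarrow> complex" where
  "wedge_op a S T = (if a \<notin> T \<and> S = insert a T then (-1) ^ card {b\<in>T. b < a} else 0)"

definition contr_op :: "nat \<Rightarrow> nat set \<Rightarrow> nat set \<Rightarrow> complex" where
  "contr_op a S T = (if a \<in> T \<and> S = T - {a} then (-1) ^ card {b\<in>T. b < a} else 0)"

text \<open>Elements of H = V (x) (W (+) W*) are coefficient arrays c i p (i < 2n, p < 2g)
  w.r.t. the basis v_i (x) u_p. Clifford action on Lambda F: the F-part acts by exterior
  multiplication, the F*-part phi by contraction with the functional x |-> h(x,phi),
  where h = eps (x) alpha, alpha(w_k, w^l) = delta_kl.\<close>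
definition cliff :: "nat \<Rightarrow> nat \<Rightarrow> complex mat \<Rightarrow> (nat \<Rightarrow> nat \<Rightarrow> complex)
                      \<Rightarrow> nat set \<Rightarrow> nat set \<Rightarrow> complex" where
  "cliff n g E c = (\<lambda>S T. \<Sum>a<2*n*g.
       c (a div g) (a mod g) * wedge_op a S T
     + (\<Sum>i<2*n. E $$ (a div g, i) * c i (g + a mod g)) * contr_op a S T)"

definition basis_F :: "nat \<Rightarrow> nat \<Rightarrow> nat \<Rightarrow> nat \<Rightarrow> complex" where
  "basis_F g a = (\<lambda>i p. if i = a div g \<and> p = a mod g then 1 else 0)"

text \<open>The dual basis vector of F* (h(e_b, dual_F a) = delta_ab), as an element of H.\<close>
definition dual_F :: "nat \<Rightarrow> complex mat \<Rightarrow> nat \<Rightarrow> nat \<Rightarrow> nat \<Rightarrow> complex" where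
  "dual_F g E a = (\<lambda>i p. if p = g + a mod g then inv_mat E $$ (i, a div g) else 0)"

definition actX :: "nat \<Rightarrow> complex mat \<Rightarrow> (nat \<Rightarrow> nat \<Rightarrow> complex) \<Rightarrow> nat \<Rightarrow> nat \<Rightarrow> complex" where
  "actX g X c = (\<lambda>i q. \<Sum>p<2*g. X $$ (q, p) * c i p)"

definition spin :: "nat \<Rightarrow> nat \<Rightarrow> complex mat \<Rightarrow> complex mat \<Rightarrow> nat set \<Rightarrow> nat set \<Rightarrow> complex" where
  "spin n g E X = (\<lambda>S T. (1/2) * (\<Sum>a<2*n*g.
       op_comp (2*n*g) (cliff n g E (actX g X (basis_F g a))) (cliff n g E (dual_F g E a)) S T
     + op_comp (2*n*g) (cliff n g E (actX g X (dual_F g E a))) (cliff n g E (basis_F g a)) S T))"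

text \<open>Gram matrix of alpha in the basis (w_0..w_(g-1), w^0..w^(g-1)).\<close>
definition Omega :: "nat \<Rightarrow> complex mat" where
  "Omega g = four_block_mat (0\<^sub>m g g) (1\<^sub>m g) (- 1\<^sub>m g) (0\<^sub>m g g)"

definition sp_group :: "nat \<Rightarrow> complex mat set" where
  "sp_group g = {A \<in> carrier_mat (2*g) (2*g). transpose_mat A * Omega g * A = Omega g}"

definition sp_alg :: "nat \<Rightarrow> complex mat set" where
  "sp_alg g = {X \<in> carrier_mat (2*g) (2*g).
                 transpose_mat X * Omega g + Omega g * X = 0\<^sub>m (2*g) (2*g)}"

text \<open>GL(W*) inside Sp: M (matrix w.r.t. w^k) acts on W* as M and on W as (M^T)^(-1).\<close>
definition gl_emb :: "nat \<Rightarrow> complex mat \<Rightarrow> complex mat" where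
  "gl_emb g M = four_block_mat (inv_mat (transpose_mat M)) (0\<^sub>m g g) (0\<^sub>m g g) M"

definition GF :: "nat \<Rightarrow> complex mat \<Rightarrow> nat \<Rightarrow> nat \<Rightarrow> complex" where
  "GF g M = (\<lambda>a b. if a div g = b div g then inv_mat (transpose_mat M) $$ (a mod g, b mod g) else 0)"

definition vacuum :: "nat set \<Rightarrow> complex" where
  "vacuum = (\<lambda>S. if S = {} then 1 else 0)"

definition wedge_vec :: "nat \<Rightarrow> (nat \<Rightarrow> complex) \<Rightarrow> nat set \<Rightarrow> nat set \<Rightarrow> complex" where
  "wedge_vec N f = (\<lambda>S T. \<Sum>a<N. f a * wedge_op a S T)"

text \<open>Multiplicative extension of a linear map G of F to Lambda F:
  e_(t1) ^ ... ^ e_(tk) |-> G e_(t1) ^ ... ^ G e_(tk).\<close>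
definition ext_map :: "nat \<Rightarrow> (nat \<Rightarrow> nat \<Rightarrow> complex) \<Rightarrow> nat set \<Rightarrow> nat set \<Rightarrow> complex" where
  "ext_map N G = (\<lambda>S T. foldr (\<lambda>b x. op_app N (wedge_vec N (\<lambda>a. G a b)) x)
                                (sorted_list_of_set T) vacuum S)"

definition rho0 :: "nat \<Rightarrow> nat \<Rightarrow> complex mat \<Rightarrow> nat set \<Rightarrow> nat set \<Rightarrow> complex" where
  "rho0 n g M = ext_map (2*n*g) (GF g M)"

end

theory Submission
  imports Defs
begin

text \<open>Both sides are representations of GL(W*): for rho0 this is functoriality of the exterior
  algebra, and det^n is multiplicative. Their differentials agree: for X = diag(-Y^T, Y) the spin
  operator (1/2) \<Sum>_a [(X e_a) e~^a + (X e~^a) e_a] becomes, after moving the contractions to the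
  right with the Clifford relations, the derivation of \<Lambda>F extending Id_V \<otimes> (-Y^T) plus the
  scalar -(1/2) tr_F(Id_V \<otimes> (-Y^T)) = n tr Y, which is exactly the differential of det^n rho0.
  Two one-parameter groups of operators with the same generator coincide, so the representations
  agree on the one-parameter subgroups through elementary matrices; by Gauss-Jordan elimination
  these generate GL(W*).\<close>

section \<open>Clifford relations on the exterior algebra\<close>

definition insert_sign :: "nat \<Rightarrow> nat set \<Rightarrow> complex" where
  "insert_sign a T = (-1) ^ card {b\<in>T. b < a}"

abbreviation ext_mul :: "nat \<Rightarrow> nat \<Rightarrow> (nat set \<Rightarrow> complex) \<Rightarrow> nat set \<Rightarrow> complex" where
  "ext_mul N a \<equiv> op_app N (wedge_op a)"

abbreviation contract :: "nat \<Rightarrow> nat \<Rightarrow> (nat set \<Rightarrow> complex) \<Rightarrow> nat set \<Rightarrow> complex" where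
  "contract N a \<equiv> op_app N (contr_op a)"

definition ext_basis :: "nat set \<Rightarrow> nat set \<Rightarrow> complex" where
  "ext_basis T = (\<lambda>S. if S = T then 1 else 0)"

lemma insert_sign_square [simp]: "insert_sign a T * insert_sign a T = 1"
  unfolding insert_sign_def by (simp flip: power_add add: power_even_eq[symmetric] power_mult)

lemma insert_sign_insert:
  assumes "b \<notin> T" "finite T"
  shows "insert_sign a (insert b T) = (if b < a then - insert_sign a T else insert_sign a T)"
proof (cases "b < a")
  case True
  then have "{x \<in> insert b T. x < a} = insert b {x\<in>T. x < a}" by auto
  then show ?thesis using True assms unfolding insert_sign_def by simp
next
  case False
  then have "{x \<in> insert b T. x < a} = {x\<in>T. x < a}" by auto
  then show ?thesis using False unfolding insert_sign_def by simp
qed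

lemma insert_sign_remove:
  "b \<in> T \<Longrightarrow> finite T \<Longrightarrow> insert_sign a T = (if b < a then - insert_sign a (T - {b}) else insert_sign a (T - {b}))"
  using insert_sign_insert[of b "T - {b}" a] by (simp add: insert_absorb)

lemma insert_sign_Diff_self: "insert_sign a (T - {a}) = insert_sign a T"
proof -
  have "{x \<in> T - {a}. x < a} = {x \<in> T. x < a}" by auto
  then show ?thesis unfolding insert_sign_def by simp
qed

lemma ext_mul_apply:
  assumes "S \<in> Pow {..<N}"
  shows "ext_mul N a x S = (if a \<in> S then insert_sign a (S - {a}) * x (S - {a}) else 0)"
proof -
  have pw: "wedge_op a S U * x U =
      (if U = S - {a} then (if a \<in> S then insert_sign a (S - {a}) * x (S - {a}) else 0) else 0)" for U
    by (cases "a \<notin> U \<and> S = insert a U") (auto simp: wedge_op_def insert_sign_def)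
  show ?thesis
    using assms unfolding op_app_def pw by (subst sum.delta) auto
qed

lemma contract_apply:
  assumes "S \<in> Pow {..<N}" "a < N"
  shows "contract N a x S = (if a \<notin> S then insert_sign a S * x (insert a S) else 0)"
proof -
  have c: "{b \<in> insert a S. b < a} = {b\<in>S. b < a}" by auto
  have pw: "contr_op a S U * x U =
      (if U = insert a S then (if a \<notin> S then insert_sign a S * x (insert a S) else 0) else 0)" for U
    unfolding contr_op_def insert_sign_def using c by auto
  show ?thesis
    using assms unfolding op_app_def pw by (subst sum.delta) auto
qed

lemma ext_mul_anticommute:
  assumes S: "S \<in> Pow {..<N}"
  shows "ext_mul N a (ext_mul N b x) S = - ext_mul N b (ext_mul N a x) S"
proof -
  have SP: "S - {a} \<in> Pow {..<N}" "S - {b} \<in> Pow {..<N}" using S by auto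
  have fin: "finite S" using S finite_subset by auto
  note apply_all = ext_mul_apply[OF S] ext_mul_apply[OF SP(1)] ext_mul_apply[OF SP(2)]
  show ?thesis
  proof (cases "a \<in> S \<and> b \<in> S \<and> a \<noteq> b")
    case True
    have "S - {a} - {b} = S - {b} - {a}" by auto
    moreover have "insert_sign a (S - {a}) =
        (if b < a then - insert_sign a (S - {a} - {b}) else insert_sign a (S - {a} - {b}))"
      using True fin by (intro insert_sign_remove) auto
    moreover have "insert_sign b (S - {b}) =
        (if a < b then - insert_sign b (S - {b} - {a}) else insert_sign b (S - {b} - {a}))"
      using True fin by (intro insert_sign_remove) auto
    ultimately show ?thesis using True by (simp add: apply_all)
  next
    case False
    then show ?thesis by (auto simp: apply_all)
  qed
qed

lemma contract_ext_mul_anticommute: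
  assumes S: "S \<in> Pow {..<N}" and a: "a < N" and b: "b < N"
  shows "contract N a (ext_mul N b x) S + ext_mul N b (contract N a x) S = (if a = b then x S else 0)"
proof -
  have fin: "finite S" using S finite_subset by auto
  have P1: "insert a S \<in> Pow {..<N}" and P2: "S - {b} \<in> Pow {..<N}" using S a by auto
  note apply_all = contract_apply[OF S a] ext_mul_apply[OF S] ext_mul_apply[OF P1]
    contract_apply[OF P2 a]
  consider "a = b" | "a \<noteq> b" "a \<notin> S" "b \<in> S" | "a \<noteq> b" "\<not> (a \<notin> S \<and> b \<in> S)"
    by blast
  then show ?thesis
  proof cases
    case 1
    then show ?thesis
      using S a fin
      by (auto simp: contract_apply ext_mul_apply contract_apply[OF P2 b] insert_sign_Diff_self insert_absorb)
  next
    case 2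
    have e: "insert a S - {b} = insert a (S - {b})" using 2 by auto
    have "insert_sign b (insert a S - {b}) = (if a < b then - insert_sign b (S - {b}) else insert_sign b (S - {b}))"
      unfolding e using 2 fin by (intro insert_sign_insert) auto
    moreover have "insert_sign a S = (if b < a then - insert_sign a (S - {b}) else insert_sign a (S - {b}))"
      using 2 fin by (intro insert_sign_remove) auto
    ultimately show ?thesis using 2 e by (simp add: apply_all)
  next
    case 3
    then show ?thesis by (auto simp: apply_all)
  qed
qed

lemma op_app_cong:
  assumes "\<And>U. U \<in> Pow {..<N} \<Longrightarrow> x U = y U"
  shows "op_app N P x = op_app N P y"
  unfolding op_app_def using assms by (intro ext sum.cong) auto

lemma op_app_add: "op_app N P (\<lambda>U. x U + y U) S = op_app N P x S + op_app N P y S"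
  unfolding op_app_def by (simp add: distrib_left sum.distrib)

lemma op_app_cmult: "op_app N P (\<lambda>U. c * x U) S = c * op_app N P x S"
  unfolding op_app_def by (simp add: sum_distrib_left algebra_simps)

lemma op_app_sum: "op_app N P (\<lambda>U. \<Sum>i\<in>I. y i U) S = (\<Sum>i\<in>I. op_app N P (y i) S)"
  unfolding op_app_def by (simp add: sum_distrib_left) (rule sum.swap)

lemma op_app_zero [simp]: "op_app N P (\<lambda>U. 0) S = 0"
  unfolding op_app_def by simp

lemma op_app_ext_basis:
  assumes "T \<in> Pow {..<N}"
  shows "op_app N P (ext_basis T) S = P S T"
  using assms unfolding op_app_def ext_basis_def by (simp add: if_distrib cong: if_cong)

lemma op_app_expand_ext_basis: "op_app N P x S = (\<Sum>T\<in>Pow {..<N}. x T * op_app N P (ext_basis T) S)"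
  unfolding op_app_def[of N P x] by (intro sum.cong) (simp_all add: op_app_ext_basis mult.commute)

section \<open>Linear maps of F extended to the exterior algebra\<close>

abbreviation ext_mul_vec :: "nat \<Rightarrow> (nat \<Rightarrow> complex) \<Rightarrow> (nat set \<Rightarrow> complex) \<Rightarrow> nat set \<Rightarrow> complex" where
  "ext_mul_vec N f \<equiv> op_app N (wedge_vec N f)"

lemma ext_mul_vec_expand: "ext_mul_vec N f x S = (\<Sum>a<N. f a * ext_mul N a x S)"
  unfolding op_app_def wedge_vec_def
  by (simp add: sum_distrib_left sum_distrib_right mult.assoc) (rule sum.swap)

lemma ext_mul_ext_mul_vec:
  "ext_mul N a (ext_mul_vec N h x) S = (\<Sum>b<N. h b * ext_mul N a (ext_mul N b x) S)"
proof -
  have "ext_mul_vec N h x = (\<lambda>U. \<Sum>b<N. h b * ext_mul N b x U)"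
    by (rule ext) (rule ext_mul_vec_expand)
  then show ?thesis by (simp add: op_app_sum op_app_cmult)
qed

lemma ext_mul_vec_anticommute:
  assumes S: "S \<in> Pow {..<N}"
  shows "ext_mul_vec N f (ext_mul_vec N h x) S = - ext_mul_vec N h (ext_mul_vec N f x) S"
proof -
  have "ext_mul_vec N f (ext_mul_vec N h x) S =
      (\<Sum>a<N. \<Sum>b<N. f a * (h b * ext_mul N a (ext_mul N b x) S))"
    unfolding ext_mul_vec_expand[of N f] ext_mul_ext_mul_vec sum_distrib_left ..
  also have "\<dots> = - (\<Sum>a<N. \<Sum>b<N. f a * (h b * ext_mul N b (ext_mul N a x) S))"
    unfolding sum_negf[symmetric] by (intro sum.cong refl) (subst ext_mul_anticommute[OF S], simp)
  also have "(\<Sum>a<N. \<Sum>b<N. f a * (h b * ext_mul N b (ext_mul N a x) S)) =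
      (\<Sum>b<N. \<Sum>a<N. h b * (f a * ext_mul N b (ext_mul N a x) S))"
    by (subst sum.swap) (simp only: mult.left_commute)
  also have "\<dots> = ext_mul_vec N h (ext_mul_vec N f x) S"
    unfolding ext_mul_vec_expand[of N h] ext_mul_ext_mul_vec sum_distrib_left ..
  finally show ?thesis .
qed

lemma ext_mul_vec_square:
  "S \<in> Pow {..<N} \<Longrightarrow> ext_mul_vec N f (ext_mul_vec N f x) S = 0"
  using ext_mul_vec_anticommute[of S N f f x] by simp

definition ext_word :: "nat \<Rightarrow> (nat \<Rightarrow> nat \<Rightarrow> complex) \<Rightarrow> nat list \<Rightarrow> (nat set \<Rightarrow> complex)
    \<Rightarrow> nat set \<Rightarrow> complex" where
  "ext_word N G bs y = foldr (\<lambda>b. ext_mul_vec N (\<lambda>a. G a b)) bs y"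

lemma ext_word_Nil [simp]: "ext_word N G [] y = y"
  and ext_word_Cons [simp]: "ext_word N G (b # bs) y = ext_mul_vec N (\<lambda>a. G a b) (ext_word N G bs y)"
  unfolding ext_word_def by simp_all

lemma ext_map_ext_word: "ext_map N G S T = ext_word N G (sorted_list_of_set T) vacuum S"
  unfolding ext_map_def ext_word_def ..

lemma ext_word_cong:
  assumes "\<And>U. U \<in> Pow {..<N} \<Longrightarrow> x U = y U"
  shows "U \<in> Pow {..<N} \<Longrightarrow> ext_word N G bs x U = ext_word N G bs y U"
proof (induction bs arbitrary: U)
  case Nil then show ?case using assms by simp
next
  case (Cons b bs)
  have "ext_mul_vec N (\<lambda>a. G a b) (ext_word N G bs x) = ext_mul_vec N (\<lambda>a. G a b) (ext_word N G bs y)"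
    by (rule op_app_cong) (rule Cons.IH)
  then show ?case by simp
qed

lemma ext_word_cmult:
  "U \<in> Pow {..<N} \<Longrightarrow> ext_word N G bs (\<lambda>V. c * x V) U = c * ext_word N G bs x U"
proof (induction bs arbitrary: U)
  case Nil then show ?case by simp
next
  case (Cons b bs)
  have "ext_word N G (b # bs) (\<lambda>V. c * x V) U =
      ext_mul_vec N (\<lambda>a. G a b) (\<lambda>V. c * ext_word N G bs x V) U"
    unfolding ext_word_Cons by (rule fun_cong[OF op_app_cong]) (rule Cons.IH)
  then show ?case by (simp add: op_app_cmult)
qed

lemma ext_word_zero: "U \<in> Pow {..<N} \<Longrightarrow> ext_word N G bs (\<lambda>V. 0) U = 0"
  using ext_word_cmult[of U N G bs 0 "\<lambda>V. 0"] by simp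

lemma ext_word_matrix_cong:
  assumes "\<forall>a<N. \<forall>b<N. G a b = G' a b" "set bs \<subseteq> {..<N}"
  shows "ext_word N G bs y = ext_word N G' bs y"
  using assms(2)
proof (induction bs)
  case Nil then show ?case by simp
next
  case (Cons b bs)
  then have "wedge_vec N (\<lambda>a. G a b) = wedge_vec N (\<lambda>a. G' a b)"
    unfolding wedge_vec_def using assms(1) by auto
  then show ?case using Cons by simp
qed

lemma ext_map_matrix_cong:
  assumes "\<forall>a<N. \<forall>b<N. G a b = G' a b" "T \<in> Pow {..<N}"
  shows "ext_map N G S T = ext_map N G' S T"
proof -
  have "finite T" using assms(2) finite_subset by auto
  then have "set (sorted_list_of_set T) \<subseteq> {..<N}" using assms(2) by auto
  then show ?thesis unfolding ext_map_ext_word using ext_word_matrix_cong[OF assms(1)] by simp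
qed

lemma ext_mul_vec_ext_word:
  "U \<in> Pow {..<N} \<Longrightarrow>
   ext_mul_vec N f (ext_word N G bs y) U = (-1) ^ length bs * ext_word N G bs (ext_mul_vec N f y) U"
proof (induction bs arbitrary: U)
  case Nil then show ?case by simp
next
  case (Cons b bs)
  have "ext_mul_vec N f (ext_word N G (b # bs) y) U =
      - ext_mul_vec N (\<lambda>a. G a b) (ext_mul_vec N f (ext_word N G bs y)) U"
    unfolding ext_word_Cons by (rule ext_mul_vec_anticommute[OF Cons.prems])
  also have "ext_mul_vec N (\<lambda>a. G a b) (ext_mul_vec N f (ext_word N G bs y)) U =
      ext_mul_vec N (\<lambda>a. G a b) (\<lambda>V. (-1) ^ length bs * ext_word N G bs (ext_mul_vec N f y) V) U"
    by (rule fun_cong[OF op_app_cong]) (rule Cons.IH)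
  finally show ?case by (simp add: op_app_cmult)
qed

lemma sorted_list_of_set_insert_split:
  assumes "finite T" "a \<notin> T"
  shows "sorted_list_of_set (insert a T) =
     filter (\<lambda>x. x < a) (sorted_list_of_set T) @ a # filter (\<lambda>x. a < x) (sorted_list_of_set T)"
proof -
  let ?L = "sorted_list_of_set T"
  let ?M = "filter (\<lambda>x. x < a) ?L @ a # filter (\<lambda>x. a < x) ?L"
  have s: "sorted ?M" using sorted_filter[of id] by (auto simp: sorted_append sorted_wrt_filter)
  have d: "distinct ?M" using assms by auto
  have st: "set ?M = insert a T" using assms linorder_neqE_nat by auto
  from sorted_list_of_set.idem_if_sorted_distinct[OF s d] show ?thesis unfolding st .
qed

lemma sorted_list_of_set_split:
  assumes "finite T" "a \<notin> T"
  shows "sorted_list_of_set T =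
     filter (\<lambda>x. x < a) (sorted_list_of_set T) @ filter (\<lambda>x. a < x) (sorted_list_of_set T)"
proof -
  let ?L = "sorted_list_of_set T"
  let ?M = "filter (\<lambda>x. x < a) ?L @ filter (\<lambda>x. a < x) ?L"
  have s: "sorted ?M" by (auto simp: sorted_append sorted_wrt_filter)
  have d: "distinct ?M" using assms by auto
  have st: "set ?M = T" using assms by (force simp: not_less order_le_less)
  from sorted_list_of_set.idem_if_sorted_distinct[OF s d] show ?thesis unfolding st by simp
qed

lemma length_filter_less_sorted_list_of_set:
  "finite T \<Longrightarrow> length (filter (\<lambda>x. x < a) (sorted_list_of_set T)) = card {b\<in>T. b < a}"
  by (subst distinct_card[symmetric]) auto

text \<open>In the image of e_a \<and> e_T under \<Lambda>G, moving G e_a to its sorted position in the word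
  costs exactly the sign insert_sign a T; if a \<in> T the word vanishes since G e_a occurs twice.\<close>

lemma ext_word_insert:
  assumes T: "T \<in> Pow {..<N}" "a \<notin> T" and S: "S \<in> Pow {..<N}"
  shows "ext_word N G (sorted_list_of_set (insert a T)) vacuum S =
         insert_sign a T * ext_mul_vec N (\<lambda>c. G c a) (ext_word N G (sorted_list_of_set T) vacuum) S"
proof -
  have fin: "finite T" using T finite_subset by auto
  let ?ys = "filter (\<lambda>x. x < a) (sorted_list_of_set T)"
  let ?zs = "filter (\<lambda>x. a < x) (sorted_list_of_set T)"
  have "ext_mul_vec N (\<lambda>c. G c a) (ext_word N G (sorted_list_of_set T) vacuum) S =
        ext_mul_vec N (\<lambda>c. G c a) (ext_word N G ?ys (ext_word N G ?zs vacuum)) S"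
    by (subst sorted_list_of_set_split[OF fin T(2)]) (simp add: ext_word_def)
  also have "\<dots> = (-1) ^ length ?ys * ext_word N G ?ys (ext_word N G (a # ?zs) vacuum) S"
    using ext_mul_vec_ext_word[OF S] by simp
  also have "\<dots> = insert_sign a T * ext_word N G (sorted_list_of_set (insert a T)) vacuum S"
    by (simp add: sorted_list_of_set_insert_split[OF fin T(2)] length_filter_less_sorted_list_of_set[OF fin]
        insert_sign_def ext_word_def)
  finally show ?thesis by (simp add: mult.assoc[symmetric])
qed

lemma ext_word_repeated:
  assumes T: "T \<in> Pow {..<N}" "a \<in> T" and S: "S \<in> Pow {..<N}"
  shows "ext_mul_vec N (\<lambda>c. G c a) (ext_word N G (sorted_list_of_set T) vacuum) S = 0"
proof -
  have fin: "finite (T - {a})" using T finite_subset by auto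
  have TT: "T = insert a (T - {a})" using T by auto
  let ?ys = "filter (\<lambda>x. x < a) (sorted_list_of_set (T - {a}))"
  let ?zs = "filter (\<lambda>x. a < x) (sorted_list_of_set (T - {a}))"
  have "ext_mul_vec N (\<lambda>c. G c a) (ext_word N G (sorted_list_of_set T) vacuum) S =
      ext_mul_vec N (\<lambda>c. G c a) (ext_word N G ?ys (ext_word N G (a # ?zs) vacuum)) S"
    by (subst TT, subst sorted_list_of_set_insert_split[OF fin]) (simp_all add: ext_word_def)
  also have "\<dots> = (-1) ^ length ?ys *
      ext_word N G ?ys (ext_mul_vec N (\<lambda>c. G c a) (ext_word N G (a # ?zs) vacuum)) S"
    by (rule ext_mul_vec_ext_word[OF S])
  also have "ext_word N G ?ys (ext_mul_vec N (\<lambda>c. G c a) (ext_word N G (a # ?zs) vacuum)) S =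
      ext_word N G ?ys (\<lambda>V. 0) S"
    by (rule ext_word_cong[OF _ S]) (simp add: ext_mul_vec_square)
  finally show ?thesis by (simp add: ext_word_zero[OF S])
qed

lemma ext_map_ext_mul_basis:
  assumes T: "T \<in> Pow {..<N}" and S: "S \<in> Pow {..<N}" and a: "a < N"
  shows "op_app N (ext_map N G) (ext_mul N a (ext_basis T)) S =
         ext_mul_vec N (\<lambda>c. G c a) (\<lambda>U. ext_map N G U T) S"
proof -
  have pw: "ext_map N G S U * ext_mul N a (ext_basis T) U =
      (if U = insert a T then (if a \<notin> T then ext_map N G S U * insert_sign a T else 0) else 0)"
    if U: "U \<in> Pow {..<N}" for U
    by (auto simp: ext_mul_apply[OF U] ext_basis_def insert_Diff_if)
  have "op_app N (ext_map N G) (ext_mul N a (ext_basis T)) S =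
      (\<Sum>U\<in>Pow {..<N}. if U = insert a T then (if a \<notin> T then ext_map N G S U * insert_sign a T else 0) else 0)"
    unfolding op_app_def[of N "ext_map N G"] by (rule sum.cong[OF refl pw])
  also have "\<dots> = (if a \<notin> T then ext_map N G S (insert a T) * insert_sign a T else 0)"
    using T a by (subst sum.delta) auto
  also have "\<dots> = ext_mul_vec N (\<lambda>c. G c a) (\<lambda>U. ext_map N G U T) S"
    unfolding ext_map_ext_word
    using ext_word_insert[OF T _ S, of a G] ext_word_repeated[OF T _ S, of a G] by simp
  finally show ?thesis .
qed

definition fmat_mult :: "nat \<Rightarrow> (nat \<Rightarrow> nat \<Rightarrow> complex) \<Rightarrow> (nat \<Rightarrow> nat \<Rightarrow> complex) \<Rightarrow> nat \<Rightarrow> nat \<Rightarrow> complex" where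
  "fmat_mult N G H = (\<lambda>a b. \<Sum>c<N. G a c * H c b)"

definition fmat_one :: "nat \<Rightarrow> nat \<Rightarrow> complex" where
  "fmat_one = (\<lambda>a b. if a = b then 1 else 0)"

lemma ext_map_ext_mul_vec:
  assumes S: "S \<in> Pow {..<N}"
  shows "op_app N (ext_map N G) (ext_mul_vec N f x) S =
         ext_mul_vec N (\<lambda>c. \<Sum>a<N. G c a * f a) (op_app N (ext_map N G) x) S"
proof -
  have "op_app N (ext_map N G) (ext_mul_vec N f x) S =
      op_app N (ext_map N G) (\<lambda>U. \<Sum>a<N. \<Sum>T\<in>Pow {..<N}. f a * x T * ext_mul N a (ext_basis T) U) S"
  proof (rule fun_cong[OF op_app_cong])
    fix U
    show "ext_mul_vec N f x U = (\<Sum>a<N. \<Sum>T\<in>Pow {..<N}. f a * x T * ext_mul N a (ext_basis T) U)"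
      unfolding ext_mul_vec_expand
      by (intro sum.cong refl, subst op_app_expand_ext_basis) (simp add: sum_distrib_left mult.assoc)
  qed
  also have "\<dots> = (\<Sum>a<N. \<Sum>T\<in>Pow {..<N}. f a * x T * op_app N (ext_map N G) (ext_mul N a (ext_basis T)) S)"
    by (simp add: op_app_sum op_app_cmult)
  also have "\<dots> = (\<Sum>a<N. \<Sum>T\<in>Pow {..<N}.
      f a * x T * ext_mul_vec N (\<lambda>c. G c a) (\<lambda>U. ext_map N G U T) S)"
    using ext_map_ext_mul_basis[OF _ S] by (intro sum.cong refl) auto
  also have "\<dots> = (\<Sum>a<N. f a * ext_mul_vec N (\<lambda>c. G c a) (op_app N (ext_map N G) x) S)"
  proof (rule sum.cong[OF refl])
    fix a
    have "ext_mul_vec N (\<lambda>c. G c a) (op_app N (ext_map N G) x) S =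
        (\<Sum>T\<in>Pow {..<N}. x T * ext_mul_vec N (\<lambda>c. G c a) (\<lambda>U. ext_map N G U T) S)"
      unfolding op_app_def[of N "ext_map N G"] by (simp add: mult.commute op_app_sum op_app_cmult)
    then show "(\<Sum>T\<in>Pow {..<N}. f a * x T * ext_mul_vec N (\<lambda>c. G c a) (\<lambda>U. ext_map N G U T) S) =
        f a * ext_mul_vec N (\<lambda>c. G c a) (op_app N (ext_map N G) x) S"
      by (simp add: sum_distrib_left algebra_simps)
  qed
  also have "\<dots> = ext_mul_vec N (\<lambda>c. \<Sum>a<N. G c a * f a) (op_app N (ext_map N G) x) S"
    unfolding ext_mul_vec_expand sum_distrib_left sum_distrib_right
    by (rule trans[OF sum.swap]) (simp add: algebra_simps)
  finally show ?thesis .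
qed

lemma ext_map_ext_word_vacuum:
  "S \<in> Pow {..<N} \<Longrightarrow>
   op_app N (ext_map N G) (ext_word N H bs vacuum) S = ext_word N (fmat_mult N G H) bs vacuum S"
proof (induction bs arbitrary: S)
  case Nil
  have "op_app N (ext_map N G) vacuum S = ext_map N G S {}"
    unfolding op_app_def vacuum_def by (simp add: if_distrib cong: if_cong)
  also have "\<dots> = vacuum S"
    unfolding ext_map_ext_word by simp
  finally show ?case by simp
next
  case (Cons b bs)
  have col: "(\<lambda>c. \<Sum>a<N. G c a * H a b) = (\<lambda>c. fmat_mult N G H c b)"
    by (simp add: fmat_mult_def)
  have "op_app N (ext_map N G) (ext_word N H (b # bs) vacuum) S =
      ext_mul_vec N (\<lambda>c. fmat_mult N G H c b) (op_app N (ext_map N G) (ext_word N H bs vacuum)) S"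
    unfolding ext_word_Cons col[symmetric] by (rule ext_map_ext_mul_vec[OF Cons.prems])
  also have "\<dots> = ext_word N (fmat_mult N G H) (b # bs) vacuum S"
    unfolding ext_word_Cons by (rule fun_cong[OF op_app_cong]) (rule Cons.IH)
  finally show ?case .
qed

lemma ext_map_mult:
  assumes "S \<in> Pow {..<N}"
  shows "op_comp N (ext_map N G) (ext_map N H) S T = ext_map N (fmat_mult N G H) S T"
proof -
  have "op_comp N (ext_map N G) (ext_map N H) S T =
      op_app N (ext_map N G) (ext_word N H (sorted_list_of_set T) vacuum) S"
    unfolding op_comp_def op_app_def ext_map_ext_word[of N H] ..
  then show ?thesis
    unfolding ext_map_ext_word_vacuum[OF assms] ext_map_ext_word[of N "fmat_mult N G H"] .
qed

lemma sum_fmat_one_column: "b < N \<Longrightarrow> (\<Sum>a<N. fmat_one a b * f a) = f b"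
  unfolding fmat_one_def by (simp add: if_distrib[of "\<lambda>x. x * _"] cong: if_cong)

lemma wedge_vec_fmat_one_column: "b < N \<Longrightarrow> wedge_vec N (\<lambda>a. fmat_one a b) = wedge_op b"
  unfolding wedge_vec_def by (simp add: sum_fmat_one_column)

lemma ext_word_one:
  assumes "sorted bs" "distinct bs" "set bs \<subseteq> {..<N}" "S \<in> Pow {..<N}"
  shows "ext_word N fmat_one bs vacuum S = ext_basis (set bs) S"
  using assms
proof (induction bs arbitrary: S)
  case Nil then show ?case by (simp add: vacuum_def ext_basis_def)
next
  case (Cons b bs)
  have b: "b < N" using Cons.prems by auto
  have IH: "ext_word N fmat_one bs vacuum U = ext_basis (set bs) U" if "U \<in> Pow {..<N}" for U
    using Cons.prems that by (intro Cons.IH) auto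
  have sign: "insert_sign b (set bs) = 1"
  proof -
    have e: "{c \<in> set bs. c < b} = {}" using Cons.prems by auto
    show ?thesis unfolding insert_sign_def e by simp
  qed
  have "ext_word N fmat_one (b # bs) vacuum S = ext_mul N b (ext_basis (set bs)) S"
    unfolding ext_word_Cons wedge_vec_fmat_one_column[OF b] by (rule fun_cong[OF op_app_cong]) (rule IH)
  also have "\<dots> = ext_basis (set (b # bs)) S"
  proof (cases "S = insert b (set bs)")
    case True
    moreover have "b \<notin> set bs" using Cons.prems by simp
    ultimately show ?thesis
      unfolding ext_mul_apply[OF Cons.prems(4)] ext_basis_def by (simp add: sign)
  next
    case False
    then show ?thesis
      unfolding ext_mul_apply[OF Cons.prems(4)] ext_basis_def by (simp add: insert_Diff_if) blast
  qed
  finally show ?case .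
qed

lemma ext_map_one:
  assumes "S \<in> Pow {..<N}" "T \<in> Pow {..<N}"
  shows "ext_map N fmat_one S T = (if S = T then 1 else 0)"
proof -
  have "finite T" using assms finite_subset by auto
  then show ?thesis
    using ext_word_one[of "sorted_list_of_set T" N S] assms
    by (auto simp: ext_map_ext_word ext_basis_def)
qed

definition derivation_ext :: "nat \<Rightarrow> (nat \<Rightarrow> nat \<Rightarrow> complex) \<Rightarrow> (nat set \<Rightarrow> complex) \<Rightarrow> nat set \<Rightarrow> complex" where
  "derivation_ext N Z x = (\<lambda>S. \<Sum>a<N. \<Sum>c<N. Z a c * ext_mul N a (contract N c x) S)"

lemma derivation_ext_cong:
  assumes "\<And>U. U \<in> Pow {..<N} \<Longrightarrow> x U = y U"
  shows "derivation_ext N Z x = derivation_ext N Z y"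
proof -
  have "contract N c x = contract N c y" for c by (rule op_app_cong) (rule assms)
  then show ?thesis unfolding derivation_ext_def by simp
qed

lemma ext_mul_contract_ext_mul:
  assumes S: "S \<in> Pow {..<N}" and b: "b < N" and c: "c < N"
  shows "ext_mul N a (contract N c (ext_mul N b y)) S =
    (if c = b then ext_mul N a y S else 0) + ext_mul N b (ext_mul N a (contract N c y)) S"
proof -
  have "contract N c (ext_mul N b y) U = (if c = b then y U else 0) + (-1) * ext_mul N b (contract N c y) U"
    if "U \<in> Pow {..<N}" for U
    using contract_ext_mul_anticommute[OF that c b, of y] by (simp add: eq_diff_eq)
  then have "ext_mul N a (contract N c (ext_mul N b y)) S =
      ext_mul N a (\<lambda>U. (if c = b then y U else 0) + (-1) * ext_mul N b (contract N c y) U) S"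
    by (intro fun_cong[OF op_app_cong])
  also have "\<dots> = (if c = b then ext_mul N a y S else 0) - ext_mul N a (ext_mul N b (contract N c y)) S"
    by (simp only: op_app_add op_app_cmult) (cases "c = b"; simp)
  finally show ?thesis unfolding ext_mul_anticommute[OF S, of a b] by simp
qed

lemma derivation_ext_ext_mul:
  assumes S: "S \<in> Pow {..<N}" and b: "b < N"
  shows "derivation_ext N Z (ext_mul N b y) S =
    ext_mul_vec N (\<lambda>a. Z a b) y S + ext_mul N b (derivation_ext N Z y) S"
proof -
  have "derivation_ext N Z (ext_mul N b y) S =
      (\<Sum>a<N. \<Sum>c<N. (if c = b then Z a c * ext_mul N a y S else 0) +
        Z a c * ext_mul N b (ext_mul N a (contract N c y)) S)"
    unfolding derivation_ext_def
    by (intro sum.cong refl) (simp add: ext_mul_contract_ext_mul[OF S b] distrib_left)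
  also have "\<dots> = ext_mul_vec N (\<lambda>a. Z a b) y S + ext_mul N b (derivation_ext N Z y) S"
    unfolding sum.distrib ext_mul_vec_expand derivation_ext_def
    using b by (simp add: op_app_sum op_app_cmult)
  finally show ?thesis .
qed

lemma derivation_ext_vacuum:
  assumes S: "S \<in> Pow {..<N}"
  shows "derivation_ext N Z vacuum S = 0"
proof -
  have "contract N c vacuum = (\<lambda>U. 0)" if "c < N" for c
    using that unfolding op_app_def contr_op_def vacuum_def by (intro ext sum.neutral) auto
  then show ?thesis unfolding derivation_ext_def by simp
qed

lemma has_vector_derivative_op_app:
  assumes "\<And>U. U \<in> Pow {..<N} \<Longrightarrow> ((\<lambda>t. x t U) has_vector_derivative x' U) F"
  shows "((\<lambda>t. op_app N P (x t) S) has_vector_derivative op_app N P x' S) F"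
  unfolding op_app_def by (intro has_vector_derivative_sum has_vector_derivative_mult_right assms) auto

lemma has_vector_derivative_ext_word:
  assumes H0: "\<forall>a<N. \<forall>b<N. H 0 a b = fmat_one a b"
    and HD: "\<forall>a<N. \<forall>b<N. ((\<lambda>t. H t a b) has_vector_derivative Z a b) (at 0)"
  shows "set bs \<subseteq> {..<N} \<Longrightarrow> S \<in> Pow {..<N} \<Longrightarrow>
    ((\<lambda>t. ext_word N (H t) bs vacuum S) has_vector_derivative
      derivation_ext N Z (ext_word N fmat_one bs vacuum) S) (at 0)"
proof (induction bs arbitrary: S)
  case Nil
  then show ?case by (simp add: derivation_ext_vacuum has_vector_derivative_const)
next
  case (Cons b bs)
  have b: "b < N" and bs: "set bs \<subseteq> {..<N}" using Cons.prems by auto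
  let ?w = "ext_word N fmat_one bs vacuum"
  have expand: "ext_word N (H t) (b # bs) vacuum S =
      (\<Sum>a<N. H t a b * ext_mul N a (ext_word N (H t) bs vacuum) S)" for t
    by (simp add: ext_mul_vec_expand)
  have "((\<lambda>t. \<Sum>a<N. H t a b * ext_mul N a (ext_word N (H t) bs vacuum) S) has_vector_derivative
      (\<Sum>a<N. H 0 a b * ext_mul N a (derivation_ext N Z ?w) S +
        Z a b * ext_mul N a (ext_word N (H 0) bs vacuum) S)) (at 0)"
  proof (intro has_vector_derivative_sum has_vector_derivative_mult)
    show "((\<lambda>t. H t a b) has_vector_derivative Z a b) (at 0)" if "a \<in> {..<N}" for a
      using that HD b by auto
    show "((\<lambda>t. ext_mul N a (ext_word N (H t) bs vacuum) S) has_vector_derivative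
        ext_mul N a (derivation_ext N Z ?w) S) (at 0)" for a
      by (rule has_vector_derivative_op_app) (rule Cons.IH[OF bs])
  qed
  also have "(\<Sum>a<N. H 0 a b * ext_mul N a (derivation_ext N Z ?w) S +
        Z a b * ext_mul N a (ext_word N (H 0) bs vacuum) S) =
      ext_mul N b (derivation_ext N Z ?w) S + ext_mul_vec N (\<lambda>a. Z a b) ?w S"
  proof -
    have "(\<Sum>a<N. H 0 a b * ext_mul N a (derivation_ext N Z ?w) S) =
        (\<Sum>a<N. fmat_one a b * ext_mul N a (derivation_ext N Z ?w) S)"
      using H0 b by (intro sum.cong) auto
    then show ?thesis
      by (simp add: sum.distrib ext_mul_vec_expand sum_fmat_one_column[OF b]
          ext_word_matrix_cong[OF H0 bs])
  qed
  also have "\<dots> = derivation_ext N Z (ext_word N fmat_one (b # bs) vacuum) S"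
    using derivation_ext_ext_mul[OF Cons.prems(2) b] by (simp add: wedge_vec_fmat_one_column[OF b])
  finally show ?case unfolding expand .
qed

lemma has_vector_derivative_ext_map:
  assumes H0: "\<forall>a<N. \<forall>b<N. H 0 a b = fmat_one a b"
    and HD: "\<forall>a<N. \<forall>b<N. ((\<lambda>t. H t a b) has_vector_derivative Z a b) (at 0)"
    and S: "S \<in> Pow {..<N}" and T: "T \<in> Pow {..<N}"
  shows "((\<lambda>t. ext_map N (H t) S T) has_vector_derivative derivation_ext N Z (ext_basis T) S) (at 0)"
proof -
  have fin: "finite T" using T finite_subset by auto
  then have sl: "set (sorted_list_of_set T) \<subseteq> {..<N}" using T by auto
  have "derivation_ext N Z (ext_word N fmat_one (sorted_list_of_set T) vacuum) =
      derivation_ext N Z (ext_basis T)"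
    by (rule derivation_ext_cong) (use ext_word_one[of "sorted_list_of_set T" N] fin sl in auto)
  then show ?thesis
    unfolding ext_map_ext_word using has_vector_derivative_ext_word[OF H0 HD sl S] by simp
qed

section \<open>GL(W*) inside Sp(W \<oplus> W*)\<close>

lemma inv_mat_eqI:
  assumes A: "A \<in> carrier_mat k k" and B: "B \<in> carrier_mat k k" and AB: "A * B = 1\<^sub>m k"
  shows "inv_mat A = B"
proof -
  have BA: "B * A = 1\<^sub>m k" by (rule mat_mult_left_right_inverse[OF A B AB])
  have dA: "dim_row A = k" using A by simp
  let ?P = "\<lambda>B. B \<in> carrier_mat k k \<and> A * B = 1\<^sub>m k \<and> B * A = 1\<^sub>m k"
  have "?P (inv_mat A)" unfolding inv_mat_def dA by (rule someI[of ?P B]) (use B AB BA in auto)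
  then have C: "inv_mat A \<in> carrier_mat k k" "inv_mat A * A = 1\<^sub>m k" by auto
  have "inv_mat A = inv_mat A * (A * B)" using C by (simp add: AB)
  also have "\<dots> = (inv_mat A * A) * B" by (rule assoc_mult_mat[symmetric, OF C(1) A B])
  also have "\<dots> = B" using C B by simp
  finally show ?thesis .
qed

lemma inv_mat_inverse:
  assumes A: "A \<in> carrier_mat k k" and d: "det A \<noteq> 0"
  shows "inv_mat A \<in> carrier_mat k k" "A * inv_mat A = 1\<^sub>m k" "inv_mat A * A = 1\<^sub>m k"
proof -
  have "A \<in> Units (ring_mat TYPE(complex) k ())" by (rule det_non_zero_imp_unit[OF A d])
  then obtain B where B: "B \<in> carrier_mat k k" "A * B = 1\<^sub>m k"
    unfolding Units_def ring_mat_def by auto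
  then show "inv_mat A \<in> carrier_mat k k" "A * inv_mat A = 1\<^sub>m k" "inv_mat A * A = 1\<^sub>m k"
    using inv_mat_eqI[OF A B] mat_mult_left_right_inverse[OF A B] by auto
qed

definition contragredient :: "complex mat \<Rightarrow> complex mat" where
  "contragredient M = inv_mat (transpose_mat M)"

lemma contragredient_inverse:
  assumes M: "M \<in> carrier_mat g g" and d: "det M \<noteq> 0"
  shows "contragredient M \<in> carrier_mat g g"
    "transpose_mat M * contragredient M = 1\<^sub>m g" "contragredient M * transpose_mat M = 1\<^sub>m g"
proof -
  have tM: "transpose_mat M \<in> carrier_mat g g" using M by simp
  have "det (transpose_mat M) \<noteq> 0" using det_transpose[OF M] d by simp
  from inv_mat_inverse[OF tM this]
  show "contragredient M \<in> carrier_mat g g"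
    "transpose_mat M * contragredient M = 1\<^sub>m g" "contragredient M * transpose_mat M = 1\<^sub>m g"
    unfolding contragredient_def by auto
qed

lemma contragredient_transpose:
  assumes M: "M \<in> carrier_mat g g" and d: "det M \<noteq> 0"
  shows "transpose_mat (contragredient M) * M = 1\<^sub>m g"
proof -
  note C = contragredient_inverse[OF M d]
  have tM: "transpose_mat M \<in> carrier_mat g g" and tC: "transpose_mat (contragredient M) \<in> carrier_mat g g"
    using M C by auto
  have "transpose_mat (contragredient M * transpose_mat M) = M * transpose_mat (contragredient M)"
    using transpose_mult[OF C(1) tM] by simp
  then have "M * transpose_mat (contragredient M) = 1\<^sub>m g" using C(3) by simp
  then show ?thesis by (rule mat_mult_left_right_inverse[OF M tC])
qed

lemma contragredient_mult:
  assumes A: "A \<in> carrier_mat g g" "det A \<noteq> 0" and B: "B \<in> carrier_mat g g" "det B \<noteq> 0"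
  shows "contragredient (A * B) = contragredient A * contragredient B"
  unfolding contragredient_def[of "A * B"]
proof (rule inv_mat_eqI)
  note a = contragredient_inverse[OF A] and b = contragredient_inverse[OF B]
  have tA: "transpose_mat A \<in> carrier_mat g g" and tB: "transpose_mat B \<in> carrier_mat g g"
    using A B by auto
  have "transpose_mat (A * B) * (contragredient A * contragredient B) =
      (transpose_mat B * transpose_mat A) * (contragredient A * contragredient B)"
    by (simp add: transpose_mult[OF A(1) B(1)])
  also have "\<dots> = transpose_mat B * (transpose_mat A * (contragredient A * contragredient B))"
    by (rule assoc_mult_mat[OF tB tA mult_carrier_mat[OF a(1) b(1)]])
  also have "transpose_mat A * (contragredient A * contragredient B) =
      (transpose_mat A * contragredient A) * contragredient B"
    by (rule assoc_mult_mat[symmetric, OF tA a(1) b(1)])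
  also have "\<dots> = contragredient B" using a b by simp
  also have "transpose_mat B * contragredient B = 1\<^sub>m g" by (rule b(2))
  finally show "transpose_mat (A * B) * (contragredient A * contragredient B) = 1\<^sub>m g" .
qed (use A B contragredient_inverse[OF A] contragredient_inverse[OF B] in auto)

lemma contragredient_one [simp]: "contragredient (1\<^sub>m g) = 1\<^sub>m g"
  unfolding contragredient_def by (rule inv_mat_eqI[of _ g]) auto

lemma gl_emb_contragredient: "gl_emb g M = four_block_mat (contragredient M) (0\<^sub>m g g) (0\<^sub>m g g) M"
  unfolding gl_emb_def contragredient_def ..

lemma gl_emb_index:
  assumes M: "M \<in> carrier_mat g g" "det M \<noteq> 0" and i: "i < 2*g" and j: "j < 2*g"
  shows "gl_emb g M $$ (i,j) =
    (if i < g then if j < g then contragredient M $$ (i,j) else 0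
     else if j < g then 0 else M $$ (i-g, j-g))"
  unfolding gl_emb_contragredient using contragredient_inverse(1)[OF M] M(1) i j
  by (subst index_mat_four_block) auto

lemma gl_emb_carrier:
  "M \<in> carrier_mat g g \<Longrightarrow> det M \<noteq> 0 \<Longrightarrow> gl_emb g M \<in> carrier_mat (2*g) (2*g)"
  unfolding gl_emb_contragredient using contragredient_inverse(1)
  by (auto intro!: four_block_carrier_mat[of _ g g _ g g, simplified] simp: mult_2)

lemma gl_emb_mult:
  assumes A: "A \<in> carrier_mat g g" "det A \<noteq> 0" and B: "B \<in> carrier_mat g g" "det B \<noteq> 0"
  shows "gl_emb g (A * B) = gl_emb g A * gl_emb g B"
proof -
  note a = contragredient_inverse[OF A] and b = contragredient_inverse[OF B]
  show ?thesis unfolding gl_emb_contragredient contragredient_mult[OF A B]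
    by (subst mult_four_block_mat[OF a(1) zero_carrier_mat zero_carrier_mat A(1) b(1)
          zero_carrier_mat zero_carrier_mat B(1)])
       (use A B a b in auto)
qed

lemma gl_emb_one [simp]: "gl_emb g (1\<^sub>m g) = 1\<^sub>m (2*g)"
  unfolding gl_emb_contragredient by (rule eq_matI) auto

lemma gl_emb_in_sp_group:
  assumes M: "M \<in> carrier_mat g g" "det M \<noteq> 0"
  shows "gl_emb g M \<in> sp_group g"
proof -
  note C = contragredient_inverse[OF M]
  have tM: "transpose_mat M \<in> carrier_mat g g" and tC: "transpose_mat (contragredient M) \<in> carrier_mat g g"
    using M C by auto
  have z: "- 0\<^sub>m g g = (0\<^sub>m g g :: complex mat)" by (rule eq_matI) auto
  have tr: "transpose_mat (gl_emb g M) =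
      four_block_mat (transpose_mat (contragredient M)) (0\<^sub>m g g) (0\<^sub>m g g) (transpose_mat M)"
    unfolding gl_emb_contragredient
    by (subst transpose_four_block_mat[OF C(1) zero_carrier_mat zero_carrier_mat M(1)]) simp
  have Om: "transpose_mat (gl_emb g M) * Omega g =
      four_block_mat (0\<^sub>m g g) (transpose_mat (contragredient M)) (- transpose_mat M) (0\<^sub>m g g)"
    unfolding tr Omega_def
    by (subst mult_four_block_mat[OF tC zero_carrier_mat zero_carrier_mat tM zero_carrier_mat
          one_carrier_mat uminus_carrier_mat[OF one_carrier_mat] zero_carrier_mat])
       (use tM tC z in simp)
  have "transpose_mat (gl_emb g M) * Omega g * gl_emb g M = four_block_mat (0\<^sub>m g g) (1\<^sub>m g) (- 1\<^sub>m g) (0\<^sub>m g g)"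
    unfolding Om unfolding gl_emb_contragredient
    by (subst mult_four_block_mat[OF zero_carrier_mat tC uminus_carrier_mat[OF tM] zero_carrier_mat
          C(1) zero_carrier_mat zero_carrier_mat M(1)])
       (use tM tC C M contragredient_transpose[OF M] in simp)
  then show ?thesis unfolding sp_group_def Omega_def[symmetric] using gl_emb_carrier[OF M] by auto
qed

text \<open>The differential of gl_emb at the identity, in direction Y.\<close>

definition gl_diff :: "nat \<Rightarrow> complex mat \<Rightarrow> complex mat" where
  "gl_diff g Y = four_block_mat (- transpose_mat Y) (0\<^sub>m g g) (0\<^sub>m g g) Y"

lemma gl_diff_index:
  assumes "Y \<in> carrier_mat g g" "q < 2*g" "p < 2*g"
  shows "gl_diff g Y $$ (q,p) =
    (if q < g \<and> p < g then - Y $$ (p,q) else if g \<le> q \<and> g \<le> p then Y $$ (q-g, p-g) else 0)"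
  using assms unfolding gl_diff_def by (subst index_mat_four_block) auto

lemma gl_diff_in_sp_alg:
  assumes Y: "Y \<in> carrier_mat g g"
  shows "gl_diff g Y \<in> sp_alg g"
proof -
  have tY: "transpose_mat Y \<in> carrier_mat g g" and ntY: "- transpose_mat Y \<in> carrier_mat g g"
    and nY: "- Y \<in> carrier_mat g g" using Y by auto
  have z: "- 0\<^sub>m g g = (0\<^sub>m g g :: complex mat)" by (rule eq_matI) auto
  have tr: "transpose_mat (gl_diff g Y) = four_block_mat (- Y) (0\<^sub>m g g) (0\<^sub>m g g) (transpose_mat Y)"
    unfolding gl_diff_def
    by (subst transpose_four_block_mat[OF ntY zero_carrier_mat zero_carrier_mat Y])
       (simp add: transpose_uminus)
  have p1: "transpose_mat (gl_diff g Y) * Omega g =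
      four_block_mat (0\<^sub>m g g) (- Y) (- transpose_mat Y) (0\<^sub>m g g)"
    unfolding tr Omega_def
    by (subst mult_four_block_mat[OF nY zero_carrier_mat zero_carrier_mat tY zero_carrier_mat
          one_carrier_mat uminus_carrier_mat[OF one_carrier_mat] zero_carrier_mat])
       (use Y tY nY z in simp)
  have p2: "Omega g * gl_diff g Y = four_block_mat (0\<^sub>m g g) Y (transpose_mat Y) (0\<^sub>m g g)"
    unfolding gl_diff_def Omega_def
    by (subst mult_four_block_mat[OF zero_carrier_mat one_carrier_mat
          uminus_carrier_mat[OF one_carrier_mat] zero_carrier_mat ntY zero_carrier_mat zero_carrier_mat Y])
       (use Y tY nY z in simp)
  have "transpose_mat (gl_diff g Y) * Omega g + Omega g * gl_diff g Y = 0\<^sub>m (2*g) (2*g)"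
    unfolding p1 p2
    by (subst add_four_block_mat[OF zero_carrier_mat nY uminus_carrier_mat[OF tY] zero_carrier_mat
          zero_carrier_mat Y tY zero_carrier_mat])
       (rule eq_matI, use Y in auto)
  moreover have "gl_diff g Y \<in> carrier_mat (2*g) (2*g)"
    unfolding gl_diff_def using Y by (auto simp: mult_2)
  ultimately show ?thesis unfolding sp_alg_def by auto
qed

lemma GF_contragredient:
  "GF g M a b = (if a div g = b div g then contragredient M $$ (a mod g, b mod g) else 0)"
  unfolding GF_def contragredient_def ..

lemma sum_lessThan_mult_split:
  fixes F :: "nat \<Rightarrow> 'a :: comm_monoid_add"
  shows "(\<Sum>c<m*g. F c) = (\<Sum>d<m. \<Sum>k<g. F (d*g + k))"
proof -
  have "(\<Sum>k\<in>{d*g..<d*g+g}. F k) = (\<Sum>k<g. F (d*g + k))" for d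
    using sum.shift_bounds_nat_ivl[of F 0 "d*g" g] by (simp add: atLeast0LessThan add.commute)
  then show ?thesis by (simp flip: sum.nat_group)
qed

lemma GF_mult:
  assumes A: "A \<in> carrier_mat g g" "det A \<noteq> 0" and B: "B \<in> carrier_mat g g" "det B \<noteq> 0"
    and a: "a < 2*n*g" and b: "b < 2*n*g"
  shows "GF g (A * B) a b = fmat_mult (2*n*g) (GF g A) (GF g B) a b"
proof -
  note ca = contragredient_inverse(1)[OF A] and cb = contragredient_inverse(1)[OF B]
  have g: "0 < g" using a by (cases g) auto
  have am: "a mod g < g" "b mod g < g" and ad: "a div g < 2*n" "b div g < 2*n"
    using g a b by (auto simp: less_mult_imp_div_less mult.commute)
  have block: "(\<Sum>k<g. GF g A a (d*g+k) * GF g B (d*g+k) b) =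
      (if d = a div g \<and> a div g = b div g
       then (\<Sum>k<g. contragredient A $$ (a mod g, k) * contragredient B $$ (k, b mod g)) else 0)" for d
  proof -
    have "(d*g+k) div g = d \<and> (d*g+k) mod g = k" if "k < g" for k using that g by simp
    then show ?thesis by (auto simp: GF_contragredient intro!: sum.cong sum.neutral)
  qed
  have "fmat_mult (2*n*g) (GF g A) (GF g B) a b =
      (if a div g = b div g
       then (\<Sum>k<g. contragredient A $$ (a mod g, k) * contragredient B $$ (k, b mod g)) else 0)"
    unfolding fmat_mult_def sum_lessThan_mult_split[of _ "2*n" g] block using ad by simp
  also have "\<dots> = GF g (A * B) a b"
    unfolding GF_contragredient contragredient_mult[OF A B]
    using ca cb am by (simp add: scalar_prod_def atLeast0LessThan)
  finally show ?thesis ..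
qed

lemma GF_one:
  assumes "a < 2*n*g" "b < 2*n*g"
  shows "GF g (1\<^sub>m g) a b = fmat_one a b"
proof -
  have "a = b \<longleftrightarrow> a div g = b div g \<and> a mod g = b mod g" by (metis div_mult_mod_eq)
  moreover have "a mod g < g" "b mod g < g" using assms by (cases g; simp)+
  ultimately show ?thesis by (auto simp: GF_contragredient fmat_one_def)
qed

definition det_rho0 :: "nat \<Rightarrow> nat \<Rightarrow> complex mat \<Rightarrow> nat set \<Rightarrow> nat set \<Rightarrow> complex" where
  "det_rho0 n g M = (\<lambda>S T. det M ^ n * rho0 n g M S T)"

lemma op_comp_cmult:
  "op_comp N (\<lambda>S T. c * P S T) (\<lambda>S T. d * Q S T) S T = c * d * op_comp N P Q S T"
  unfolding op_comp_def by (simp add: sum_distrib_left algebra_simps)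

lemma det_rho0_mult:
  assumes A: "A \<in> carrier_mat g g" "det A \<noteq> 0" and B: "B \<in> carrier_mat g g" "det B \<noteq> 0"
    and S: "S \<in> Pow {..<2*n*g}" and T: "T \<in> Pow {..<2*n*g}"
  shows "det_rho0 n g (A * B) S T = op_comp (2*n*g) (det_rho0 n g A) (det_rho0 n g B) S T"
proof -
  have "rho0 n g (A * B) S T = ext_map (2*n*g) (fmat_mult (2*n*g) (GF g A) (GF g B)) S T"
    unfolding rho0_def by (rule ext_map_matrix_cong[OF _ T]) (use GF_mult[OF A B] in auto)
  also have "\<dots> = op_comp (2*n*g) (rho0 n g A) (rho0 n g B) S T"
    unfolding rho0_def by (rule ext_map_mult[symmetric, OF S])
  finally show ?thesis
    unfolding det_rho0_def op_comp_cmult det_mult[OF A(1) B(1)] by (simp add: power_mult_distrib)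
qed

lemma rho0_one:
  assumes S: "S \<in> Pow {..<2*n*g}" and T: "T \<in> Pow {..<2*n*g}"
  shows "rho0 n g (1\<^sub>m g) S T = (if S = T then 1 else 0)"
proof -
  have "rho0 n g (1\<^sub>m g) S T = ext_map (2*n*g) fmat_one S T"
    unfolding rho0_def by (rule ext_map_matrix_cong[OF _ T]) (use GF_one in auto)
  then show ?thesis using ext_map_one[OF S T] by simp
qed

lemma det_rho0_one:
  "S \<in> Pow {..<2*n*g} \<Longrightarrow> T \<in> Pow {..<2*n*g} \<Longrightarrow> det_rho0 n g (1\<^sub>m g) S T = (if S = T then 1 else 0)"
  unfolding det_rho0_def using rho0_one by simp

section \<open>The spin operator of a diagonal element of sp\<close>

text \<open>The velocity of GF g along a curve of matrices with velocity Y: the matrix of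
  Id_V \<otimes> (- Y^T) on F.\<close>

definition GF_diff :: "nat \<Rightarrow> complex mat \<Rightarrow> nat \<Rightarrow> nat \<Rightarrow> complex" where
  "GF_diff g Y = (\<lambda>a b. if a div g = b div g then - Y $$ (b mod g, a mod g) else 0)"

definition mat_trace :: "complex mat \<Rightarrow> complex" where
  "mat_trace Y = (\<Sum>i<dim_row Y. Y $$ (i,i))"

lemma F_index_bounds:
  assumes "(a::nat) < 2*n*g"
  shows "a div g < 2*n" "a mod g < g"
proof -
  show "a div g < 2*n" using assms by (simp add: less_mult_imp_div_less)
  have "0 < g" using assms by (cases g) auto
  then show "a mod g < g" by simp
qed

lemma nat_eq_iff_div_mod_eq: "(a::nat) = b \<longleftrightarrow> a div g = b div g \<and> a mod g = b mod g"
  by (metis div_mult_mod_eq)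

lemma sum_mod_eq_mult_sum:
  fixes f :: "nat \<Rightarrow> complex"
  shows "(\<Sum>a<m*g. f (a mod g)) = of_nat m * (\<Sum>k<g. f k)"
  unfolding sum_lessThan_mult_split by simp

context
  fixes n g :: nat and E :: "complex mat"
  assumes E_dim: "E \<in> carrier_mat (2*n) (2*n)" and E_nondeg: "det E \<noteq> 0"
begin

lemma sum_E_inv_mat:
  assumes "i < 2*n" "j < 2*n"
  shows "(\<Sum>k<2*n. E $$ (i,k) * inv_mat E $$ (k,j)) = (if i = j then 1 else 0)"
proof -
  note Ei = inv_mat_inverse[OF E_dim E_nondeg]
  have "(E * inv_mat E) $$ (i,j) = (\<Sum>k<2*n. E $$ (i,k) * inv_mat E $$ (k,j))"
    using E_dim Ei(1) assms by (simp add: scalar_prod_def atLeast0LessThan)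
  then show ?thesis using Ei(2) assms by simp
qed

lemma cliff_basis_F:
  assumes b: "b < 2*n*g"
  shows "cliff n g E (basis_F g b) S T = wedge_op b S T"
proof -
  have "cliff n g E (basis_F g b) S T = (\<Sum>a<2*n*g. if a = b then wedge_op a S T else 0)"
    unfolding cliff_def basis_F_def
    using F_index_bounds(2)[OF b] nat_eq_iff_div_mod_eq[of _ b g] by (intro sum.cong refl) auto
  also have "\<dots> = wedge_op b S T" using b by simp
  finally show ?thesis .
qed

lemma cliff_dual_F:
  assumes b: "b < 2*n*g"
  shows "cliff n g E (dual_F g E b) S T = contr_op b S T"
proof -
  have "cliff n g E (dual_F g E b) S T = (\<Sum>a<2*n*g. if a = b then contr_op a S T else 0)"
    unfolding cliff_def dual_F_def
  proof (intro sum.cong refl)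
    fix a assume "a \<in> {..<2*n*g}"
    then have a: "a < 2*n*g" by simp
    have "(\<Sum>i<2*n. E $$ (a div g, i) * (if g + a mod g = g + b mod g then inv_mat E $$ (i, b div g) else 0))
        = (if a mod g = b mod g then (\<Sum>i<2*n. E $$ (a div g, i) * inv_mat E $$ (i, b div g)) else 0)"
      by simp
    also have "\<dots> = (if a = b then 1 else 0)"
      using sum_E_inv_mat[OF F_index_bounds(1)[OF a] F_index_bounds(1)[OF b]]
        nat_eq_iff_div_mod_eq[of a b g] by auto
    finally show "(if a mod g = g + b mod g then inv_mat E $$ (a div g, b div g) else 0) * wedge_op a S T +
        (\<Sum>i<2*n. E $$ (a div g, i) * (if g + a mod g = g + b mod g then inv_mat E $$ (i, b div g) else 0)) *
          contr_op a S T = (if a = b then contr_op a S T else 0)"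
      using F_index_bounds(2)[OF a] by simp
  qed
  also have "\<dots> = contr_op b S T" using b by simp
  finally show ?thesis .
qed

lemma actX_gl_diff_basis_F:
  assumes Y: "Y \<in> carrier_mat g g" and b: "b < 2*n*g"
  shows "actX g (gl_diff g Y) (basis_F g b) i q = (if i = b div g then gl_diff g Y $$ (q, b mod g) else 0)"
proof -
  have "b mod g < 2*g" using F_index_bounds(2)[OF b] by simp
  then show ?thesis
    unfolding actX_def basis_F_def by (simp add: if_distrib[of "\<lambda>x. _ * x"] sum.delta' cong: if_cong)
qed

lemma actX_gl_diff_dual_F:
  assumes Y: "Y \<in> carrier_mat g g" and b: "b < 2*n*g"
  shows "actX g (gl_diff g Y) (dual_F g E b) i q = gl_diff g Y $$ (q, g + b mod g) * inv_mat E $$ (i, b div g)"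
proof -
  have "g + b mod g < 2*g" using F_index_bounds(2)[OF b] by simp
  then show ?thesis
    unfolding actX_def dual_F_def by (simp add: if_distrib[of "\<lambda>x. _ * x"] sum.delta' cong: if_cong)
qed

lemma cliff_actX_gl_diff_basis_F:
  assumes Y: "Y \<in> carrier_mat g g" and b: "b < 2*n*g"
  shows "cliff n g E (actX g (gl_diff g Y) (basis_F g b)) S T =
    (\<Sum>a<2*n*g. GF_diff g Y a b * wedge_op a S T)"
  unfolding cliff_def
proof (intro sum.cong refl)
  fix a assume "a \<in> {..<2*n*g}"
  then have am: "a mod g < g" using F_index_bounds(2) by blast
  have bm: "b mod g < g" using F_index_bounds(2)[OF b] .
  have "a mod g < 2*g" "g + a mod g < 2*g" "b mod g < 2*g" using am bm by linarith+
  note index = gl_diff_index[OF Y this(2,3)] gl_diff_index[OF Y this(1,3)]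
  have "actX g (gl_diff g Y) (basis_F g b) i (g + a mod g) = 0" for i
    using am bm by (simp add: actX_gl_diff_basis_F[OF Y b] index)
  moreover have "actX g (gl_diff g Y) (basis_F g b) (a div g) (a mod g) = GF_diff g Y a b"
    using am bm by (simp add: actX_gl_diff_basis_F[OF Y b] index GF_diff_def)
  ultimately show "actX g (gl_diff g Y) (basis_F g b) (a div g) (a mod g) * wedge_op a S T +
      (\<Sum>i<2*n. E $$ (a div g, i) * actX g (gl_diff g Y) (basis_F g b) i (g + a mod g)) * contr_op a S T =
      GF_diff g Y a b * wedge_op a S T" by simp
qed

lemma cliff_actX_gl_diff_dual_F:
  assumes Y: "Y \<in> carrier_mat g g" and b: "b < 2*n*g"
  shows "cliff n g E (actX g (gl_diff g Y) (dual_F g E b)) S T =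
    (\<Sum>a<2*n*g. - GF_diff g Y b a * contr_op a S T)"
  unfolding cliff_def
proof (intro sum.cong refl)
  fix a assume "a \<in> {..<2*n*g}"
  then have a: "a < 2*n*g" by simp
  have am: "a mod g < g" and bm: "b mod g < g" using F_index_bounds(2) a b by blast+
  have "a mod g < 2*g" "g + a mod g < 2*g" "g + b mod g < 2*g" using am bm by linarith+
  note index = gl_diff_index[OF Y this(1,3)] gl_diff_index[OF Y this(2,3)]
  have "\<not> g \<le> a mod g" using am by linarith
  then have "actX g (gl_diff g Y) (dual_F g E b) (a div g) (a mod g) = 0"
    by (simp add: actX_gl_diff_dual_F[OF Y b] index)
  moreover have "(\<Sum>i<2*n. E $$ (a div g, i) * actX g (gl_diff g Y) (dual_F g E b) i (g + a mod g))
      = Y $$ (a mod g, b mod g) * (\<Sum>i<2*n. E $$ (a div g, i) * inv_mat E $$ (i, b div g))"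
    using am bm by (simp add: actX_gl_diff_dual_F[OF Y b] index sum_distrib_left algebra_simps)
  moreover have "\<dots> = - GF_diff g Y b a"
    using sum_E_inv_mat[OF F_index_bounds(1)[OF a] F_index_bounds(1)[OF b]]
    by (auto simp: GF_diff_def)
  ultimately show "actX g (gl_diff g Y) (dual_F g E b) (a div g) (a mod g) * wedge_op a S T +
      (\<Sum>i<2*n. E $$ (a div g, i) * actX g (gl_diff g Y) (dual_F g E b) i (g + a mod g)) * contr_op a S T =
      - GF_diff g Y b a * contr_op a S T" by simp
qed

lemma spin_basis_term:
  assumes Y: "Y \<in> carrier_mat g g" and b: "b < 2*n*g" and T: "T \<in> Pow {..<2*n*g}"
  shows "op_comp (2*n*g) (cliff n g E (actX g (gl_diff g Y) (basis_F g b))) (cliff n g E (dual_F g E b)) S T =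
    (\<Sum>a<2*n*g. GF_diff g Y a b * ext_mul (2*n*g) a (contract (2*n*g) b (ext_basis T)) S)"
proof -
  let ?N = "2*n*g"
  have "op_comp ?N (cliff n g E (actX g (gl_diff g Y) (basis_F g b))) (cliff n g E (dual_F g E b)) S T =
      (\<Sum>U\<in>Pow {..<?N}. (\<Sum>a<?N. GF_diff g Y a b * wedge_op a S U) * contr_op b U T)"
    unfolding op_comp_def cliff_actX_gl_diff_basis_F[OF Y b] cliff_dual_F[OF b] ..
  also have "\<dots> = (\<Sum>a<?N. GF_diff g Y a b * (\<Sum>U\<in>Pow {..<?N}. wedge_op a S U * contr_op b U T))"
    by (simp add: sum_distrib_right sum_distrib_left mult.assoc) (rule sum.swap)
  finally show ?thesis
    unfolding op_app_def[of ?N "wedge_op _"] op_app_ext_basis[OF T] .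
qed

lemma spin_dual_term:
  assumes Y: "Y \<in> carrier_mat g g" and b: "b < 2*n*g"
    and S: "S \<in> Pow {..<2*n*g}" and T: "T \<in> Pow {..<2*n*g}"
  shows "op_comp (2*n*g) (cliff n g E (actX g (gl_diff g Y) (dual_F g E b))) (cliff n g E (basis_F g b)) S T =
    (\<Sum>a<2*n*g. - GF_diff g Y b a *
      ((if a = b then ext_basis T S else 0) - ext_mul (2*n*g) b (contract (2*n*g) a (ext_basis T)) S))"
proof -
  let ?N = "2*n*g"
  have "op_comp ?N (cliff n g E (actX g (gl_diff g Y) (dual_F g E b))) (cliff n g E (basis_F g b)) S T =
      (\<Sum>U\<in>Pow {..<?N}. (\<Sum>a<?N. - GF_diff g Y b a * contr_op a S U) * wedge_op b U T)"
    unfolding op_comp_def cliff_actX_gl_diff_dual_F[OF Y b] cliff_basis_F[OF b] ..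
  also have "\<dots> = (\<Sum>a<?N. - GF_diff g Y b a * (\<Sum>U\<in>Pow {..<?N}. contr_op a S U * wedge_op b U T))"
    by (simp only: sum_distrib_right sum_distrib_left mult.assoc) (rule sum.swap)
  also have "\<dots> = (\<Sum>a<?N. - GF_diff g Y b a * contract ?N a (ext_mul ?N b (ext_basis T)) S)"
    unfolding op_app_def[of ?N "contr_op _"] op_app_ext_basis[OF T] ..
  also have "\<dots> = (\<Sum>a<?N. - GF_diff g Y b a *
      ((if a = b then ext_basis T S else 0) - ext_mul ?N b (contract ?N a (ext_basis T)) S))"
    using contract_ext_mul_anticommute[OF S _ b] by (intro sum.cong refl) (simp add: eq_diff_eq)
  finally show ?thesis .
qed

text \<open>The Clifford relation moves the contractions in the second half of the spin formula to
  the right; the commutator terms add up to -(1/2) tr_F (GF_diff g Y) = n tr Y.\<close>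

lemma spin_gl_diff:
  assumes Y: "Y \<in> carrier_mat g g" and S: "S \<in> Pow {..<2*n*g}" and T: "T \<in> Pow {..<2*n*g}"
  shows "spin n g E (gl_diff g Y) S T =
    derivation_ext (2*n*g) (GF_diff g Y) (ext_basis T) S + of_nat n * mat_trace Y * (if S = T then 1 else 0)"
proof -
  let ?N = "2*n*g" and ?Z = "GF_diff g Y" and ?x = "ext_basis T"
  have trace: "(\<Sum>b<?N. ?Z b b) = - (2 * of_nat n * mat_trace Y)"
  proof -
    have "(\<Sum>b<?N. ?Z b b) = - (\<Sum>b<(2*n)*g. Y $$ (b mod g, b mod g))"
      by (simp add: GF_diff_def sum_negf)
    then show ?thesis
      using Y sum_mod_eq_mult_sum[where f = "\<lambda>k. Y $$ (k,k)" and m = "2*n" and g = g] by (simp add: mat_trace_def)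
  qed
  have basis_terms: "(\<Sum>b<?N. \<Sum>a<?N. ?Z a b * ext_mul ?N a (contract ?N b ?x) S) =
      derivation_ext ?N ?Z ?x S"
    unfolding derivation_ext_def by (rule sum.swap)
  have "(\<Sum>b<?N. \<Sum>a<?N. - ?Z b a * ((if a = b then ?x S else 0) - ext_mul ?N b (contract ?N a ?x) S)) =
      (\<Sum>b<?N. \<Sum>a<?N. (if a = b then - ?Z b a * ?x S else 0) + ?Z b a * ext_mul ?N b (contract ?N a ?x) S)"
    by (intro sum.cong refl) (simp add: algebra_simps)
  also have "\<dots> = - (\<Sum>b<?N. ?Z b b) * ?x S + derivation_ext ?N ?Z ?x S"
    unfolding sum.distrib derivation_ext_def by (simp add: sum_negf sum_distrib_right)
  finally have dual_terms: "(\<Sum>b<?N. \<Sum>a<?N. - ?Z b a *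
      ((if a = b then ?x S else 0) - ext_mul ?N b (contract ?N a ?x) S)) =
      2 * of_nat n * mat_trace Y * ?x S + derivation_ext ?N ?Z ?x S"
    unfolding trace by simp
  have "spin n g E (gl_diff g Y) S T = (1/2) * ((\<Sum>b<?N. \<Sum>a<?N. ?Z a b * ext_mul ?N a (contract ?N b ?x) S)
      + (\<Sum>b<?N. \<Sum>a<?N. - ?Z b a * ((if a = b then ?x S else 0) - ext_mul ?N b (contract ?N a ?x) S)))"
    unfolding spin_def by (simp add: sum.distrib spin_basis_term[OF Y _ T] spin_dual_term[OF Y _ S T])
  then show ?thesis unfolding basis_terms dual_terms by (simp add: ext_basis_def algebra_simps)
qed

end

section \<open>One-parameter groups of operators are determined by their generator\<close>

lemma op_comp_assoc: "op_comp N (op_comp N P Q) R S T = op_comp N P (op_comp N Q R) S T"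
proof -
  have "op_comp N (op_comp N P Q) R S T = (\<Sum>U\<in>Pow {..<N}. \<Sum>V\<in>Pow {..<N}. P S V * Q V U * R U T)"
    unfolding op_comp_def by (simp add: sum_distrib_right)
  also have "\<dots> = (\<Sum>V\<in>Pow {..<N}. \<Sum>U\<in>Pow {..<N}. P S V * Q V U * R U T)" by (rule sum.swap)
  also have "\<dots> = op_comp N P (op_comp N Q R) S T"
    unfolding op_comp_def by (simp add: sum_distrib_left mult.assoc)
  finally show ?thesis .
qed

lemma op_comp_id_left:
  assumes "S \<in> Pow {..<N}"
  shows "op_comp N (\<lambda>S T. if S = T then 1 else 0) P S T = P S T"
proof -
  have "op_comp N (\<lambda>S T. if S = T then 1 else 0) P S T = (\<Sum>U\<in>Pow {..<N}. if U = S then P S T else 0)"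
    unfolding op_comp_def by (intro sum.cong) auto
  then show ?thesis using assms by simp
qed

lemma op_comp_id_right:
  assumes "T \<in> Pow {..<N}"
  shows "op_comp N P (\<lambda>S T. if S = T then 1 else 0) S T = P S T"
proof -
  have "op_comp N P (\<lambda>S T. if S = T then 1 else 0) S T = (\<Sum>U\<in>Pow {..<N}. if U = T then P S T else 0)"
    unfolding op_comp_def by (intro sum.cong) auto
  then show ?thesis using assms by simp
qed

lemma op_comp_cong:
  assumes "\<And>U. U \<in> Pow {..<N} \<Longrightarrow> P S U = P' S U" "\<And>U. U \<in> Pow {..<N} \<Longrightarrow> Q U T = Q' U T"
  shows "op_comp N P Q S T = op_comp N P' Q' S T"
  unfolding op_comp_def using assms by (intro sum.cong) auto

lemma has_vector_derivative_op_comp_right: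
  assumes "\<And>U. U \<in> Pow {..<N} \<Longrightarrow> ((\<lambda>t. Q t U T) has_vector_derivative Q' U T) F"
  shows "((\<lambda>t. op_comp N P (Q t) S T) has_vector_derivative op_comp N P Q' S T) F"
  unfolding op_comp_def by (intro has_vector_derivative_sum has_vector_derivative_mult_right assms) auto

lemma has_vector_derivative_op_comp_left:
  assumes "\<And>U. U \<in> Pow {..<N} \<Longrightarrow> ((\<lambda>t. P t S U) has_vector_derivative P' S U) F"
  shows "((\<lambda>t. op_comp N (P t) Q S T) has_vector_derivative op_comp N P' Q S T) F"
  unfolding op_comp_def by (intro has_vector_derivative_sum has_vector_derivative_mult_left assms) auto

lemma has_vector_derivative_at_shift:
  fixes F :: "real \<Rightarrow> 'a :: real_normed_vector"
  assumes "((\<lambda>s. F (t + s)) has_vector_derivative D) (at 0)"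
  shows "(F has_vector_derivative D) (at t)"
proof -
  have d: "((\<lambda>u. u - t) has_vector_derivative 1) (at t)"
    by (auto intro!: derivative_eq_intros)
  have "((\<lambda>s. F (t + s)) has_vector_derivative D) (at ((\<lambda>u. u - t) t))" using assms by simp
  from vector_diff_chain_at[OF d this] show ?thesis by (simp add: o_def)
qed

lemma has_vector_derivative_reflect_at:
  fixes F :: "real \<Rightarrow> 'a :: real_normed_vector"
  assumes "(F has_vector_derivative D) (at (-t))"
  shows "((\<lambda>t. F (-t)) has_vector_derivative -D) (at t)"
proof -
  have d: "((\<lambda>u. - u) has_vector_derivative -1) (at t)"
    by (auto intro!: derivative_eq_intros)
  have "(F has_vector_derivative D) (at ((\<lambda>u. - u) t))" using assms by simp
  from vector_diff_chain_at[OF d this] show ?thesis by (simp add: o_def)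
qed

locale operator_one_parameter_group =
  fixes N :: nat and R :: "real \<Rightarrow> nat set \<Rightarrow> nat set \<Rightarrow> complex"
    and K :: "nat set \<Rightarrow> nat set \<Rightarrow> complex"
  assumes add: "\<And>s t S T. S \<in> Pow {..<N} \<Longrightarrow> T \<in> Pow {..<N} \<Longrightarrow>
      R (s + t) S T = op_comp N (R s) (R t) S T"
    and zero: "\<And>S T. S \<in> Pow {..<N} \<Longrightarrow> T \<in> Pow {..<N} \<Longrightarrow> R 0 S T = (if S = T then 1 else 0)"
    and generator: "\<And>S T. S \<in> Pow {..<N} \<Longrightarrow> T \<in> Pow {..<N} \<Longrightarrow>
      ((\<lambda>t. R t S T) has_vector_derivative K S T) (at 0)"
begin

lemma has_vector_derivative_right:
  assumes S: "S \<in> Pow {..<N}" and T: "T \<in> Pow {..<N}"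
  shows "((\<lambda>t. R t S T) has_vector_derivative op_comp N (R t) K S T) (at t)"
proof -
  have "((\<lambda>s. op_comp N (R t) (R s) S T) has_vector_derivative op_comp N (R t) K S T) (at 0)"
    by (rule has_vector_derivative_op_comp_right) (rule generator[OF _ T])
  moreover have "(\<lambda>s. R (t + s) S T) = (\<lambda>s. op_comp N (R t) (R s) S T)"
    by (intro ext) (rule add[OF S T])
  ultimately have "((\<lambda>s. R (t + s) S T) has_vector_derivative op_comp N (R t) K S T) (at 0)"
    by simp
  then show ?thesis by (rule has_vector_derivative_at_shift)
qed

lemma has_vector_derivative_left:
  assumes S: "S \<in> Pow {..<N}" and T: "T \<in> Pow {..<N}"
  shows "((\<lambda>t. R t S T) has_vector_derivative op_comp N K (R t) S T) (at t)"
proof -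
  have "((\<lambda>s. op_comp N (R s) (R t) S T) has_vector_derivative op_comp N K (R t) S T) (at 0)"
    by (rule has_vector_derivative_op_comp_left) (rule generator[OF S])
  moreover have "(\<lambda>s. R (t + s) S T) = (\<lambda>s. op_comp N (R s) (R t) S T)"
    by (intro ext) (subst add.commute, rule add[OF S T])
  ultimately have "((\<lambda>s. R (t + s) S T) has_vector_derivative op_comp N K (R t) S T) (at 0)"
    by simp
  then show ?thesis by (rule has_vector_derivative_at_shift)
qed

end

text \<open>R t Q (-t) has derivative R t K Q (-t) - R t K Q (-t) = 0.\<close>

lemma operator_one_parameter_groups_inverse:
  assumes "operator_one_parameter_group N R K" "operator_one_parameter_group N Q K"
    and S: "S \<in> Pow {..<N}" and T: "T \<in> Pow {..<N}"
  shows "op_comp N (R t) (Q (-t)) S T = (if S = T then 1 else 0)"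
proof -
  interpret R: operator_one_parameter_group N R K by fact
  interpret Q: operator_one_parameter_group N Q K by fact
  have deriv: "((\<lambda>t. op_comp N (R t) (Q (-t)) S T) has_vector_derivative 0) (at t)" for t
  proof -
    let ?D = "\<Sum>U\<in>Pow {..<N}. R t S U * - op_comp N K (Q (-t)) U T + op_comp N (R t) K S U * Q (-t) U T"
    have D: "((\<lambda>t. op_comp N (R t) (Q (-t)) S T) has_vector_derivative ?D) (at t)"
      unfolding op_comp_def[of N "R _" "Q _"]
    proof (intro has_vector_derivative_sum has_vector_derivative_mult)
      fix U assume U: "U \<in> Pow {..<N}"
      show "((\<lambda>t. R t S U) has_vector_derivative op_comp N (R t) K S U) (at t)"
        by (rule R.has_vector_derivative_right[OF S U])
      show "((\<lambda>t. Q (-t) U T) has_vector_derivative - op_comp N K (Q (-t)) U T) (at t)"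
        by (rule has_vector_derivative_reflect_at) (rule Q.has_vector_derivative_left[OF U T])
    qed
    have "?D = - op_comp N (R t) (op_comp N K (Q (-t))) S T + op_comp N (op_comp N (R t) K) (Q (-t)) S T"
      unfolding sum.distrib op_comp_def[of N "op_comp N (R t) K"] op_comp_def[of N "R t" "op_comp N K (Q (-t))"]
      by (simp add: sum_negf)
    also have "\<dots> = 0" by (simp add: op_comp_assoc)
    finally show ?thesis using D by simp
  qed
  obtain c where c: "\<And>t. t \<in> UNIV \<Longrightarrow> op_comp N (R t) (Q (-t)) S T = c"
    by (rule has_vector_derivative_zero_constant[of UNIV]) (use deriv in auto)
  have "op_comp N (R 0) (Q (-0)) S T = op_comp N (\<lambda>S T. if S = T then 1 else 0) (Q 0) S T"
    by (rule op_comp_cong) (simp_all add: R.zero[OF S])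
  also have "\<dots> = (if S = T then 1 else 0)" by (simp add: op_comp_id_left[OF S] Q.zero[OF S T])
  finally show ?thesis using c[of t] c[of 0] by simp
qed

lemma operator_one_parameter_groups_eq:
  assumes R: "operator_one_parameter_group N R K" and Q: "operator_one_parameter_group N Q K"
    and S: "S \<in> Pow {..<N}" and T: "T \<in> Pow {..<N}"
  shows "R t S T = Q t S T"
proof -
  interpret Q: operator_one_parameter_group N Q K by fact
  have "R t S T = op_comp N (R t) (\<lambda>S T. if S = T then 1 else 0) S T"
    by (rule op_comp_id_right[symmetric, OF T])
  also have "\<dots> = op_comp N (R t) (op_comp N (Q (-t)) (Q t)) S T"
  proof (rule op_comp_cong)
    fix U assume U: "U \<in> Pow {..<N}"
    show "(if U = T then 1 else 0) = op_comp N (Q (-t)) (Q t) U T"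
      using Q.add[OF U T, of "-t" t] Q.zero[OF U T] by simp
  qed simp
  also have "\<dots> = op_comp N (op_comp N (R t) (Q (-t))) (Q t) S T"
    by (rule op_comp_assoc[symmetric])
  also have "\<dots> = op_comp N (\<lambda>S T. if S = T then 1 else 0) (Q t) S T"
    by (rule op_comp_cong) (use operator_one_parameter_groups_inverse[OF R Q S] in auto)
  also have "\<dots> = Q t S T" by (rule op_comp_id_left[OF S])
  finally show ?thesis .
qed

section \<open>Elementary matrices generate GL\<close>

inductive_set elementary_products :: "nat \<Rightarrow> 'a :: field mat set" for g where
  one: "1\<^sub>m g \<in> elementary_products g"
| multrow: "k < g \<Longrightarrow> a \<noteq> 0 \<Longrightarrow> A \<in> elementary_products g \<Longrightarrow>
    multrow_mat g k a * A \<in> elementary_products g"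
| addrow: "k < g \<Longrightarrow> l < g \<Longrightarrow> k \<noteq> l \<Longrightarrow> A \<in> elementary_products g \<Longrightarrow>
    addrow_mat g a k l * A \<in> elementary_products g"

lemma elementary_products_carrier: "A \<in> elementary_products g \<Longrightarrow> A \<in> carrier_mat g g"
  by (induction rule: elementary_products.induct) auto

lemma elementary_products_mult:
  assumes "A \<in> elementary_products g" "B \<in> elementary_products g"
  shows "A * B \<in> elementary_products g"
  using assms
proof (induction rule: elementary_products.induct)
  case one
  then show ?case using elementary_products_carrier by (metis left_mult_one_mat)
next
  case (multrow k a A)
  then show ?case
    using elementary_products_carrier[of A] elementary_products_carrier[of B]
    by (simp add: assoc_mult_mat[of _ g g _ g _ g] elementary_products.multrow)
next
  case (addrow k l A a)
  then show ?case
    using elementary_products_carrier[of A] elementary_products_carrier[of B]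
    by (simp add: assoc_mult_mat[of _ g g _ g _ g] elementary_products.addrow)
qed

lemma multrow_mat_in_elementary_products:
  "k < g \<Longrightarrow> a \<noteq> 0 \<Longrightarrow> multrow_mat g k a \<in> elementary_products g"
  using elementary_products.multrow[OF _ _ elementary_products.one] by (metis multrow_mat_carrier right_mult_one_mat)

lemma addrow_mat_in_elementary_products:
  "k < g \<Longrightarrow> l < g \<Longrightarrow> k \<noteq> l \<Longrightarrow> addrow_mat g a k l \<in> elementary_products g"
  using elementary_products.addrow[OF _ _ _ elementary_products.one] by (metis addrow_mat_carrier right_mult_one_mat)

lemma swaprows_mat_eq_addrow_multrow:
  assumes k: "k < g" and l: "l < g" and kl: "k \<noteq> l"
  shows "swaprows_mat g k l =
    addrow_mat g 1 k l * (addrow_mat g (-1) l k * (addrow_mat g 1 k l * multrow_mat g k (-1 :: 'a :: field)))"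
proof -
  let ?M = "multrow_mat g k (-1 :: 'a)"
  have "addrow_mat g 1 k l * (addrow_mat g (-1) l k * (addrow_mat g 1 k l * ?M)) =
      addrow 1 k l (addrow (-1) l k (addrow 1 k l ?M))"
    using k l by (simp add: addrow_mat[symmetric, of _ g g])
  also have "\<dots> = swaprows_mat g k l"
    by (rule eq_matI) (use k l kl in \<open>auto simp: algebra_simps\<close>)
  finally show ?thesis ..
qed

lemma swaprows_mat_in_elementary_products:
  assumes "k < g" "l < g"
  shows "swaprows_mat g k l \<in> elementary_products g"
proof (cases "k = l")
  case True
  then have "swaprows_mat g k l = (1\<^sub>m g :: 'a mat)" by (intro eq_matI) auto
  then show ?thesis using elementary_products.one by simp
next
  case False
  then show ?thesis unfolding swaprows_mat_eq_addrow_multrow[OF assms False]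
    using assms by (intro elementary_products.intros multrow_mat_in_elementary_products) auto
qed

lemma mult_mat_cancel_middle:
  fixes B M' M A :: "'a :: semiring_1 mat"
  assumes "B \<in> carrier_mat g g" "M' \<in> carrier_mat g g" "M \<in> carrier_mat g g" "A \<in> carrier_mat g g"
    and "M' * M = 1\<^sub>m g"
  shows "(B * M') * (M * A) = B * A"
proof -
  have "(B * M') * (M * A) = B * ((M' * M) * A)"
    using assms(1-4) by (simp add: assoc_mult_mat[of _ g g _ g _ g])
  then show ?thesis using assms(5) left_mult_one_mat[OF assms(4)] by simp
qed

lemma elementary_products_left_inverse:
  assumes "A \<in> elementary_products g"
  shows "\<exists>B \<in> elementary_products g. B * A = 1\<^sub>m g"
  using assms
proof (induction rule: elementary_products.induct)
  case one
  show ?case using elementary_products.one by force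
next
  case (multrow k a A)
  then obtain B where B: "B \<in> elementary_products g" "B * A = 1\<^sub>m g" by blast
  let ?M' = "multrow_mat g k (inverse a)"
  have "?M' * multrow_mat g k a = 1\<^sub>m g"
    using multrow_mat_inv[of k g "inverse a"] multrow by simp
  then have "(B * ?M') * (multrow_mat g k a * A) = 1\<^sub>m g"
    using B elementary_products_carrier[OF B(1)] elementary_products_carrier[OF multrow.hyps(3)]
    by (simp add: mult_mat_cancel_middle)
  moreover have "B * ?M' \<in> elementary_products g"
    using B multrow by (intro elementary_products_mult multrow_mat_in_elementary_products) auto
  ultimately show ?case by blast
next
  case (addrow k l A a)
  then obtain B where B: "B \<in> elementary_products g" "B * A = 1\<^sub>m g" by blast
  let ?M' = "addrow_mat g (- a) k l"
  have "?M' * addrow_mat g a k l = 1\<^sub>m g"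
    using addrow_mat_inv[of k g l "- a"] addrow by simp
  then have "(B * ?M') * (addrow_mat g a k l * A) = 1\<^sub>m g"
    using B elementary_products_carrier[OF B(1)] elementary_products_carrier[OF addrow.hyps(4)]
    by (simp add: mult_mat_cancel_middle)
  moreover have "B * ?M' \<in> elementary_products g"
    using B addrow by (intro elementary_products_mult addrow_mat_in_elementary_products) auto
  ultimately show ?case by blast
qed

lemma elementary_products_compose:
  assumes "P \<in> elementary_products g" "Q \<in> elementary_products g"
    and "A \<in> carrier_mat g nc" "B \<in> carrier_mat g nc'"
    and "A' = P * (Q * A)" "B' = P * (Q * B)"
  shows "\<exists>R \<in> elementary_products g. A' = R * A \<and> B' = R * B"
proof (intro bexI conjI)
  have "P \<in> carrier_mat g g" "Q \<in> carrier_mat g g"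
    using assms(1,2) by (auto intro: elementary_products_carrier)
  then show "A' = P * Q * A" "B' = P * Q * B"
    using assms(3-6) by (auto simp: assoc_mult_mat)
  show "P * Q \<in> elementary_products g" using assms(1,2) by (rule elementary_products_mult)
qed

lemma eliminate_entries_rec_elementary:
  "i < g \<Longrightarrow> (\<And>a i'. (a, i') \<in> set is \<Longrightarrow> i' < g \<and> i' \<noteq> i) \<Longrightarrow>
   \<exists>P \<in> elementary_products g. \<forall>B nc. B \<in> carrier_mat g nc \<longrightarrow> eliminate_entries_rec B i is = P * B"
proof (induction "is")
  case Nil
  show ?case by (intro bexI[OF _ elementary_products.one]) auto
next
  case (Cons ai' "is")
  obtain a i' where ai': "ai' = (a, i')" by force
  obtain P where P: "P \<in> elementary_products g"
    and id: "\<And>B nc. B \<in> carrier_mat g nc \<Longrightarrow> eliminate_entries_rec B i is = P * B"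
    using Cons by force
  let ?Add = "addrow_mat g a i' i"
  have "P * ?Add \<in> elementary_products g"
    using P Cons.prems ai' by (intro elementary_products_mult addrow_mat_in_elementary_products) auto
  moreover have "eliminate_entries_rec B i (ai' # is) = P * ?Add * B" if B: "B \<in> carrier_mat g nc" for B nc
  proof -
    have "eliminate_entries_rec B i (ai' # is) = P * addrow a i' i B"
      using B by (simp add: ai' id)
    also have "\<dots> = P * ?Add * B"
      using B Cons.prems(1) elementary_products_carrier[OF P]
      by (simp add: addrow_mat assoc_mult_mat[of P g g _ g _ nc])
    finally show ?thesis .
  qed
  ultimately show ?case by blast
qed

lemma eliminate_entries_elementary:
  assumes A: "(A :: 'a :: field mat) \<in> carrier_mat g nc" and ij: "i < g" "j < nc"
  shows "\<exists>Q \<in> elementary_products g. \<forall>C nc'. C \<in> carrier_mat g nc' \<longrightarrow>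
    eliminate_entries (\<lambda>i. A $$ (i,j)) C i j = Q * C"
proof -
  let ?ais = "map (\<lambda>i'. (- A $$ (i',j), i')) (filter (\<lambda>i'. i' \<noteq> i) [0 ..< g])"
  have "\<exists>Q \<in> elementary_products g. \<forall>C nc'. C \<in> carrier_mat g nc' \<longrightarrow> eliminate_entries_rec C i ?ais = Q * C"
    by (rule eliminate_entries_rec_elementary) (use ij in auto)
  moreover have "eliminate_entries (\<lambda>i. A $$ (i,j)) C i j = eliminate_entries_rec C i ?ais"
    if "C \<in> carrier_mat g nc'" for C nc'
    using eliminate_entries_convert[of j A i C] A ij that by simp
  ultimately show ?thesis by auto
qed

lemma gauss_jordan_main_elementary:
  assumes "A \<in> carrier_mat g nc" "B \<in> carrier_mat g nc'"
    and "gauss_jordan_main (A :: 'a :: field mat) B i j = (A', B')"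
  shows "\<exists>P \<in> elementary_products g. A' = P * A \<and> B' = P * B"
  using assms
proof (induction A B i j rule: gauss_jordan_main.induct)
  case (1 A B i j)
  note A = 1(5) and B = 1(6) and res = 1(7)
  have dim: "dim_row A = g" "dim_col A = nc" using A by auto
  note IH = 1(1-4)[OF dim[symmetric]]
  note simps = gauss_jordan_main.simps[of A B i j] Let_def
  note compose = elementary_products_compose[OF _ _ A B]
  show ?case
  proof (cases "i < g \<and> j < nc")
    case False
    with res have "A' = A" "B' = B" unfolding simps dim by auto
    then show ?thesis using A B by (intro bexI[OF _ elementary_products.one]) auto
  next
    case valid: True
    note IH = IH[OF valid refl]
    show ?thesis
    proof (cases "A $$ (i,j) = 0")
      case Z: True
      let ?is = "[i' . i' <- [Suc i ..< g], A $$ (i',j) \<noteq> 0]"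
      show ?thesis
      proof (cases ?is)
        case Nil
        with Z valid res have "gauss_jordan_main A B i (Suc j) = (A', B')"
          unfolding simps dim by simp
        from IH(1)[OF Z Nil A B this] show ?thesis .
      next
        case (Cons i' iis)
        with Z valid res have "gauss_jordan_main (swaprows i i' A) (swaprows i i' B) i j = (A', B')"
          unfolding simps dim by simp
        from IH(2)[OF Z Cons, unfolded swaprows_carrier, OF A B this]
        obtain P where P: "P \<in> elementary_products g" "A' = P * swaprows i i' A" "B' = P * swaprows i i' B"
          by blast
        from Cons have "i' \<in> set ?is" by auto
        with valid have i': "i < g" "i' < g" by auto
        show ?thesis
          by (rule compose[OF P(1) swaprows_mat_in_elementary_products[OF i']])
             (simp_all add: P(2,3) swaprows_mat[OF A i'] swaprows_mat[OF B i'])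
      qed
    next
      case nZ: False
      show ?thesis
      proof (cases "A $$ (i,j) = 1")
        case O: True
        let ?E = "\<lambda>B. eliminate_entries (\<lambda>i. A $$ (i,j)) B i j"
        from O nZ valid res have "gauss_jordan_main (?E A) (?E B) (Suc i) (Suc j) = (A', B')"
          unfolding simps dim by simp
        from IH(3)[OF nZ O refl carrier_eliminate_entries(1)[OF A] carrier_eliminate_entries(1)[OF B] this]
        obtain P where P: "P \<in> elementary_products g" "A' = P * ?E A" "B' = P * ?E B" by blast
        obtain Q where Q: "Q \<in> elementary_products g"
          and E: "\<And>C nc''. C \<in> carrier_mat g nc'' \<Longrightarrow> ?E C = Q * C"
          using eliminate_entries_elementary[OF A] valid by blast
        show ?thesis by (rule compose[OF P(1) Q]) (simp_all add: P(2,3) E[OF A] E[OF B])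
      next
        case nO: False
        let ?inv = "inverse (A $$ (i,j))"
        from nO nZ valid res have "gauss_jordan_main (multrow i ?inv A) (multrow i ?inv B) i j = (A', B')"
          unfolding simps dim by simp
        from IH(4)[OF nZ nO refl, unfolded multrow_carrier, OF A B this]
        obtain P where P: "P \<in> elementary_products g" "A' = P * multrow i ?inv A" "B' = P * multrow i ?inv B"
          by blast
        have "multrow_mat g i ?inv \<in> elementary_products g"
          using valid nZ by (intro multrow_mat_in_elementary_products) auto
        then show ?thesis
          by (rule compose[OF P(1)]) (simp_all add: P(2,3) multrow_mat[OF A] multrow_mat[OF B])
      qed
    qed
  qed
qed

lemma invertible_mat_elementary_products:
  assumes M: "(M :: 'a :: field mat) \<in> carrier_mat g g" and d: "det M \<noteq> 0"
  shows "M \<in> elementary_products g"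
proof -
  obtain A' B' where res: "gauss_jordan M (0\<^sub>m g 0) = (A', B')" by force
  have "M \<in> Units (ring_mat TYPE('a) g ())" by (rule det_non_zero_imp_unit[OF M d])
  then have "A' = 1\<^sub>m g"
    using gauss_jordan_inverse_other_direction[OF _ zero_carrier_mat] res by (metis fst_conv)
  moreover obtain P where P: "P \<in> elementary_products g" "A' = P * M"
    using gauss_jordan_main_elementary[OF M zero_carrier_mat res[unfolded gauss_jordan_def]] by blast
  ultimately have PM: "P * M = 1\<^sub>m g" by simp
  obtain Q where Q: "Q \<in> elementary_products g" "Q * P = 1\<^sub>m g"
    using elementary_products_left_inverse[OF P(1)] by blast
  have "M = Q * P * M"
    using Q(2) M by simp
  also have "\<dots> = Q * (P * M)"
    using elementary_products_carrier[OF Q(1)] elementary_products_carrier[OF P(1)] M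
    by (rule assoc_mult_mat)
  also have "\<dots> = Q" using PM elementary_products_carrier[OF Q(1)] by simp
  finally show ?thesis using Q(1) by simp
qed

section \<open>Comparing the two representations\<close>

lemma has_vector_derivative_power_at_zero:
  fixes f :: "real \<Rightarrow> complex"
  assumes "(f has_vector_derivative f') (at 0)" "f 0 = 1"
  shows "((\<lambda>t. f t ^ k) has_vector_derivative of_nat k * f') (at 0)"
proof (induction k)
  case 0 then show ?case by (simp add: has_vector_derivative_const)
next
  case (Suc k)
  have "((\<lambda>t. f t * f t ^ k) has_vector_derivative f 0 * (of_nat k * f') + f' * f 0 ^ k) (at 0)"
    by (rule has_vector_derivative_mult[OF assms(1) Suc])
  then show ?case using assms(2) by (simp add: algebra_simps)
qed

locale spin_representation =
  fixes n g :: nat and E :: "complex mat"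
    and \<rho> :: "complex mat \<Rightarrow> nat set \<Rightarrow> nat set \<Rightarrow> complex"
  assumes E_dim: "E \<in> carrier_mat (2*n) (2*n)"
    and E_nondeg: "det E \<noteq> 0"
    and rho_one: "\<forall>S\<in>Pow {..<2*n*g}. \<forall>T\<in>Pow {..<2*n*g}.
                    \<rho> (1\<^sub>m (2*g)) S T = (if S = T then 1 else 0)"
    and rho_hom: "\<forall>A\<in>sp_group g. \<forall>B\<in>sp_group g. \<forall>S\<in>Pow {..<2*n*g}. \<forall>T\<in>Pow {..<2*n*g}.
                    \<rho> (A * B) S T = op_comp (2*n*g) (\<rho> A) (\<rho> B) S T"
    and rho_diff: "\<And>X (\<gamma> :: real \<Rightarrow> complex mat).
        X \<in> sp_alg g \<Longrightarrow> (\<forall>t. \<gamma> t \<in> sp_group g) \<Longrightarrow> \<gamma> 0 = 1\<^sub>m (2*g) \<Longrightarrow>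
        (\<forall>i<2*g. \<forall>j<2*g. ((\<lambda>t. \<gamma> t $$ (i, j)) has_vector_derivative X $$ (i, j)) (at 0)) \<Longrightarrow>
        \<forall>S\<in>Pow {..<2*n*g}. \<forall>T\<in>Pow {..<2*n*g}.
          ((\<lambda>t. \<rho> (\<gamma> t) S T) has_vector_derivative spin n g E X S T) (at 0)"
begin

definition rho_agrees :: "complex mat \<Rightarrow> bool" where
  "rho_agrees M \<longleftrightarrow> M \<in> carrier_mat g g \<and> det M \<noteq> 0 \<and>
     (\<forall>S\<in>Pow {..<2*n*g}. \<forall>T\<in>Pow {..<2*n*g}. \<rho> (gl_emb g M) S T = det_rho0 n g M S T)"

lemma rho_gl_emb_mult:
  assumes "A \<in> carrier_mat g g" "det A \<noteq> 0" "B \<in> carrier_mat g g" "det B \<noteq> 0"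
    and "S \<in> Pow {..<2*n*g}" "T \<in> Pow {..<2*n*g}"
  shows "\<rho> (gl_emb g (A * B)) S T = op_comp (2*n*g) (\<rho> (gl_emb g A)) (\<rho> (gl_emb g B)) S T"
  unfolding gl_emb_mult[OF assms(1-4)] using rho_hom gl_emb_in_sp_group assms by blast

lemma rho_identity:
  "S \<in> Pow {..<2*n*g} \<Longrightarrow> T \<in> Pow {..<2*n*g} \<Longrightarrow> \<rho> (1\<^sub>m (2*g)) S T = (if S = T then 1 else 0)"
  using rho_one by simp

lemma rho_agrees_one: "rho_agrees (1\<^sub>m g)"
  unfolding rho_agrees_def using rho_identity det_rho0_one by simp

lemma rho_agrees_mult:
  assumes A: "rho_agrees A" and B: "rho_agrees B"
  shows "rho_agrees (A * B)"
proof -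
  have A': "A \<in> carrier_mat g g" "det A \<noteq> 0" and B': "B \<in> carrier_mat g g" "det B \<noteq> 0"
    using A B unfolding rho_agrees_def by auto
  have "\<rho> (gl_emb g (A * B)) S T = det_rho0 n g (A * B) S T"
    if S: "S \<in> Pow {..<2*n*g}" and T: "T \<in> Pow {..<2*n*g}" for S T
  proof -
    have "\<rho> (gl_emb g (A * B)) S T = op_comp (2*n*g) (\<rho> (gl_emb g A)) (\<rho> (gl_emb g B)) S T"
      by (rule rho_gl_emb_mult[OF A' B' S T])
    also have "\<dots> = op_comp (2*n*g) (det_rho0 n g A) (det_rho0 n g B) S T"
      by (rule op_comp_cong) (use A B S T in \<open>auto simp: rho_agrees_def\<close>)
    also have "\<dots> = det_rho0 n g (A * B) S T" by (rule det_rho0_mult[symmetric, OF A' B' S T])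
    finally show ?thesis .
  qed
  then show ?thesis unfolding rho_agrees_def using A' B' by (simp add: det_mult[OF A'(1) B'(1)])
qed

context
  fixes G :: "real \<Rightarrow> complex mat" and Y :: "complex mat"
  assumes G_carrier: "\<And>t. G t \<in> carrier_mat g g" and G_det: "\<And>t. det (G t) \<noteq> 0"
    and G_zero: "G 0 = 1\<^sub>m g" and Y: "Y \<in> carrier_mat g g"
    and G_deriv: "\<And>i j. i < g \<Longrightarrow> j < g \<Longrightarrow> ((\<lambda>t. G t $$ (i,j)) has_vector_derivative Y $$ (i,j)) (at 0)"
    and G_contragredient_deriv: "\<And>i j. i < g \<Longrightarrow> j < g \<Longrightarrow>
      ((\<lambda>t. contragredient (G t) $$ (i,j)) has_vector_derivative - Y $$ (j,i)) (at 0)"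
    and G_det_deriv: "((\<lambda>t. det (G t)) has_vector_derivative mat_trace Y) (at 0)"
begin

lemma rho_gl_emb_curve_has_vector_derivative:
  assumes "S \<in> Pow {..<2*n*g}" "T \<in> Pow {..<2*n*g}"
  shows "((\<lambda>t. \<rho> (gl_emb g (G t)) S T) has_vector_derivative spin n g E (gl_diff g Y) S T) (at 0)"
proof -
  have "((\<lambda>t. gl_emb g (G t) $$ (i, j)) has_vector_derivative gl_diff g Y $$ (i, j)) (at 0)"
    if i: "i < 2*g" and j: "j < 2*g" for i j
    unfolding gl_emb_index[OF G_carrier G_det i j] gl_diff_index[OF Y i j]
    using G_deriv[of "i - g" "j - g"] G_contragredient_deriv[of i j] i j
    by (auto simp: has_vector_derivative_const)
  then show ?thesis
    using rho_diff[OF gl_diff_in_sp_alg[OF Y]] gl_emb_in_sp_group[OF G_carrier G_det] G_zero assms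
    by simp
qed

lemma det_rho0_curve_has_vector_derivative:
  assumes S: "S \<in> Pow {..<2*n*g}" and T: "T \<in> Pow {..<2*n*g}"
  shows "((\<lambda>t. det_rho0 n g (G t) S T) has_vector_derivative spin n g E (gl_diff g Y) S T) (at 0)"
proof -
  have GF0: "\<forall>a<2*n*g. \<forall>b<2*n*g. GF g (G 0) a b = fmat_one a b"
    using GF_one G_zero by simp
  have GF_deriv: "\<forall>a<2*n*g. \<forall>b<2*n*g. ((\<lambda>t. GF g (G t) a b) has_vector_derivative GF_diff g Y a b) (at 0)"
    using F_index_bounds(2) G_contragredient_deriv
    by (auto simp: GF_contragredient GF_diff_def has_vector_derivative_const)
  have "((\<lambda>t. det (G t) ^ n * ext_map (2*n*g) (GF g (G t)) S T) has_vector_derivative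
      det (G 0) ^ n * derivation_ext (2*n*g) (GF_diff g Y) (ext_basis T) S +
      of_nat n * mat_trace Y * ext_map (2*n*g) (GF g (G 0)) S T) (at 0)"
    using has_vector_derivative_power_at_zero[OF G_det_deriv] G_zero
      has_vector_derivative_ext_map[OF GF0 GF_deriv S T]
    by (intro has_vector_derivative_mult) simp_all
  moreover have "ext_map (2*n*g) (GF g (G 0)) S T = (if S = T then 1 else 0)"
    using ext_map_matrix_cong[OF GF0 T, of S] ext_map_one[OF S T] by simp
  ultimately show ?thesis
    unfolding det_rho0_def rho0_def spin_gl_diff[OF E_dim E_nondeg Y S T] using G_zero by simp
qed

end

lemma one_parameter_subgroup_rho_agrees:
  fixes G :: "real \<Rightarrow> complex mat" and Y :: "complex mat"
  assumes G_carrier: "\<And>t. G t \<in> carrier_mat g g" and G_det: "\<And>t. det (G t) \<noteq> 0"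
    and G_add: "\<And>s t. G (s + t) = G s * G t" and G_zero: "G 0 = 1\<^sub>m g"
    and Y: "Y \<in> carrier_mat g g"
    and G_deriv: "\<And>i j. i < g \<Longrightarrow> j < g \<Longrightarrow> ((\<lambda>t. G t $$ (i,j)) has_vector_derivative Y $$ (i,j)) (at 0)"
    and G_contragredient_deriv: "\<And>i j. i < g \<Longrightarrow> j < g \<Longrightarrow>
      ((\<lambda>t. contragredient (G t) $$ (i,j)) has_vector_derivative - Y $$ (j,i)) (at 0)"
    and G_det_deriv: "((\<lambda>t. det (G t)) has_vector_derivative mat_trace Y) (at 0)"
  shows "rho_agrees (G t)"
proof -
  let ?K = "spin n g E (gl_diff g Y)"
  have "operator_one_parameter_group (2*n*g) (\<lambda>t. \<rho> (gl_emb g (G t))) ?K"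
  proof
    show "\<rho> (gl_emb g (G (s + t))) S T = op_comp (2*n*g) (\<rho> (gl_emb g (G s))) (\<rho> (gl_emb g (G t))) S T"
      if "S \<in> Pow {..<2*n*g}" "T \<in> Pow {..<2*n*g}" for s t S T
      unfolding G_add using rho_gl_emb_mult[OF G_carrier G_det G_carrier G_det that] .
  qed (simp_all add: G_zero rho_identity rho_gl_emb_curve_has_vector_derivative[OF assms(1,2,4-8)])
  moreover have "operator_one_parameter_group (2*n*g) (\<lambda>t. det_rho0 n g (G t)) ?K"
  proof
    show "det_rho0 n g (G (s + t)) S T = op_comp (2*n*g) (det_rho0 n g (G s)) (det_rho0 n g (G t)) S T"
      if "S \<in> Pow {..<2*n*g}" "T \<in> Pow {..<2*n*g}" for s t S T
      unfolding G_add using det_rho0_mult[OF G_carrier G_det G_carrier G_det that] .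
  qed (simp_all add: G_zero det_rho0_one det_rho0_curve_has_vector_derivative[OF assms(1,2,4-8)])
  ultimately have "\<rho> (gl_emb g (G t)) S T = det_rho0 n g (G t) S T"
    if "S \<in> Pow {..<2*n*g}" "T \<in> Pow {..<2*n*g}" for S T
    by (rule operator_one_parameter_groups_eq) (fact that)+
  then show ?thesis unfolding rho_agrees_def using G_carrier G_det by simp
qed

end

lemma multrow_mat_mult:
  "k < g \<Longrightarrow> multrow_mat g k a * multrow_mat g k b = multrow_mat g k (a * (b :: 'a :: comm_ring_1))"
  by (subst multrow_mat[symmetric, of _ g g]) (auto intro!: eq_matI)

lemma addrow_mat_mult:
  "k < g \<Longrightarrow> l < g \<Longrightarrow> k \<noteq> l \<Longrightarrow>
   addrow_mat g a k l * addrow_mat g b k l = addrow_mat g (a + (b :: 'a :: comm_ring_1)) k l"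
  by (subst addrow_mat[symmetric, of _ g g]) (auto intro!: eq_matI simp: algebra_simps)

lemma contragredient_multrow_mat:
  assumes "k < g" "a \<noteq> 0"
  shows "contragredient (multrow_mat g k a) = multrow_mat g k (inverse a)"
proof -
  have "transpose_mat (multrow_mat g k a) = multrow_mat g k a" by (rule eq_matI) auto
  moreover have "multrow_mat g k (1 :: complex) = 1\<^sub>m g" by (rule eq_matI) auto
  ultimately show ?thesis
    unfolding contragredient_def using assms by (intro inv_mat_eqI[of _ g]) (auto simp: multrow_mat_mult)
qed

lemma contragredient_addrow_mat:
  assumes "k < g" "l < g" "k \<noteq> l"
  shows "contragredient (addrow_mat g a k l) = addrow_mat g (- a) l k"
proof -
  have "transpose_mat (addrow_mat g a k l) = addrow_mat g a l k" by (rule eq_matI) auto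
  moreover have "addrow_mat g (0 :: complex) l k = 1\<^sub>m g" by (rule eq_matI) auto
  ultimately show ?thesis
    unfolding contragredient_def using assms by (intro inv_mat_eqI[of _ g]) (auto simp: addrow_mat_mult)
qed

lemma has_vector_derivative_exp_linear:
  "((\<lambda>t::real. exp (complex_of_real t * c)) has_vector_derivative c * exp (complex_of_real x * c)) (at x)"
proof -
  have "((\<lambda>t::real. complex_of_real t * c) has_vector_derivative c) (at x)"
    by (auto intro!: derivative_eq_intros)
  from field_vector_diff_chain_at[OF this DERIV_exp] show ?thesis by (simp add: o_def)
qed

context spin_representation
begin

lemma rho_agrees_multrow_mat:
  assumes k: "k < g" and a: "a \<noteq> 0"
  shows "rho_agrees (multrow_mat g k a)"
proof -
  define c where "c = Ln a"
  define G where "G = (\<lambda>t::real. multrow_mat g k (exp (complex_of_real t * c)) :: complex mat)"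
  define Y where "Y = mat g g (\<lambda>(i,j). if i = k \<and> j = k then c else 0)"
  have det: "det (G t) = exp (complex_of_real t * c)" for t
    unfolding G_def by (rule det_multrow_mat[OF k])
  have contragredient: "contragredient (G t) = multrow_mat g k (exp (complex_of_real t * (- c)))" for t
    unfolding G_def by (simp add: contragredient_multrow_mat[OF k] exp_minus)
  have "mat_trace Y = (\<Sum>i<g. if i = k then c else 0)"
    unfolding mat_trace_def Y_def by (intro sum.cong) auto
  then have trace: "mat_trace Y = c" using k by simp
  have "rho_agrees (G 1)"
  proof (rule one_parameter_subgroup_rho_agrees)
    show "G (s + t) = G s * G t" for s t
      unfolding G_def multrow_mat_mult[OF k] by (simp add: distrib_right exp_add)
    show "((\<lambda>t. G t $$ (i,j)) has_vector_derivative Y $$ (i,j)) (at 0)" if "i < g" "j < g" for i j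
      using that has_vector_derivative_exp_linear[of c 0]
      unfolding G_def Y_def by (cases "i = k \<and> j = k") (auto simp: has_vector_derivative_const)
    show "((\<lambda>t. contragredient (G t) $$ (i,j)) has_vector_derivative - Y $$ (j,i)) (at 0)"
      if "i < g" "j < g" for i j
      using that has_vector_derivative_exp_linear[of "- c" 0]
      unfolding contragredient Y_def by (cases "i = k \<and> j = k") (auto simp: has_vector_derivative_const)
    show "((\<lambda>t. det (G t)) has_vector_derivative mat_trace Y) (at 0)"
      unfolding det trace using has_vector_derivative_exp_linear[of c 0] by simp
    show "G t \<in> carrier_mat g g" for t unfolding G_def by simp
    show "det (G t) \<noteq> 0" for t unfolding det by simp
    show "G 0 = 1\<^sub>m g" unfolding G_def by (rule eq_matI) auto
    show "Y \<in> carrier_mat g g" unfolding Y_def by simp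
  qed
  moreover have "G 1 = multrow_mat g k a" unfolding G_def c_def using a by simp
  ultimately show ?thesis by simp
qed

lemma rho_agrees_addrow_mat:
  assumes kl: "k < g" "l < g" "k \<noteq> l"
  shows "rho_agrees (addrow_mat g a k l)"
proof -
  define G where "G = (\<lambda>t::real. addrow_mat g (complex_of_real t * a) k l :: complex mat)"
  define Y where "Y = mat g g (\<lambda>(i,j). if i = k \<and> j = l then a else 0)"
  have det: "det (G t) = 1" for t
    unfolding G_def by (rule det_addrow_mat) (use kl in auto)
  have contragredient: "contragredient (G t) = addrow_mat g (complex_of_real t * (- a)) l k" for t
    unfolding G_def by (simp add: contragredient_addrow_mat[OF kl])
  have trace: "mat_trace Y = 0"
    unfolding mat_trace_def Y_def using kl by (intro sum.neutral) auto
  have lin: "((\<lambda>t::real. complex_of_real t * b) has_vector_derivative b) (at 0)" for b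
    by (auto intro!: derivative_eq_intros)
  have "rho_agrees (G 1)"
  proof (rule one_parameter_subgroup_rho_agrees)
    show "G (s + t) = G s * G t" for s t
      unfolding G_def addrow_mat_mult[OF kl] by (simp add: distrib_right)
    show "((\<lambda>t. G t $$ (i,j)) has_vector_derivative Y $$ (i,j)) (at 0)" if "i < g" "j < g" for i j
      using that kl lin[of a] unfolding G_def Y_def
      by (cases "k = i \<and> l = j") (auto simp: has_vector_derivative_const)
    show "((\<lambda>t. contragredient (G t) $$ (i,j)) has_vector_derivative - Y $$ (j,i)) (at 0)"
      if "i < g" "j < g" for i j
      using that kl lin[of "- a"] unfolding contragredient Y_def
      by (cases "l = i \<and> k = j") (auto simp: has_vector_derivative_const)
    show "((\<lambda>t. det (G t)) has_vector_derivative mat_trace Y) (at 0)"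
      unfolding det trace by (rule has_vector_derivative_const)
    show "G t \<in> carrier_mat g g" for t unfolding G_def by simp
    show "det (G t) \<noteq> 0" for t unfolding det by simp
    show "G 0 = 1\<^sub>m g" unfolding G_def by (rule eq_matI) auto
    show "Y \<in> carrier_mat g g" unfolding Y_def by simp
  qed
  moreover have "G 1 = addrow_mat g a k l" unfolding G_def by simp
  ultimately show ?thesis by simp
qed

lemma rho_agrees_invertible:
  assumes "M \<in> carrier_mat g g" "det M \<noteq> 0"
  shows "rho_agrees M"
  using invertible_mat_elementary_products[OF assms]
proof (induction rule: elementary_products.induct)
  case one
  show ?case by (rule rho_agrees_one)
next
  case (multrow k a A)
  then show ?case by (intro rho_agrees_mult rho_agrees_multrow_mat)
next
  case (addrow k l A a)
  then show ?case by (intro rho_agrees_mult rho_agrees_addrow_mat)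
qed

end

theorem proposition1:
  fixes n g :: nat and E :: "complex mat"
    and \<rho> :: "complex mat \<Rightarrow> nat set \<Rightarrow> nat set \<Rightarrow> complex"
  assumes E_dim: "E \<in> carrier_mat (2*n) (2*n)"
    and E_skew: "transpose_mat E = - E"
    and E_nondeg: "det E \<noteq> 0"
    and rho_one: "\<forall>S\<in>Pow {..<2*n*g}. \<forall>T\<in>Pow {..<2*n*g}.
                    \<rho> (1\<^sub>m (2*g)) S T = (if S = T then 1 else 0)"
    and rho_hom: "\<forall>A\<in>sp_group g. \<forall>B\<in>sp_group g. \<forall>S\<in>Pow {..<2*n*g}. \<forall>T\<in>Pow {..<2*n*g}.
                    \<rho> (A * B) S T = op_comp (2*n*g) (\<rho> A) (\<rho> B) S T"
    and rho_diff: "\<And>X (\<gamma> :: real \<Rightarrow> complex mat).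
        X \<in> sp_alg g \<Longrightarrow> (\<forall>t. \<gamma> t \<in> sp_group g) \<Longrightarrow> \<gamma> 0 = 1\<^sub>m (2*g) \<Longrightarrow>
        (\<forall>i<2*g. \<forall>j<2*g. ((\<lambda>t. \<gamma> t $$ (i, j)) has_vector_derivative X $$ (i, j)) (at 0)) \<Longrightarrow>
        \<forall>S\<in>Pow {..<2*n*g}. \<forall>T\<in>Pow {..<2*n*g}.
          ((\<lambda>t. \<rho> (\<gamma> t) S T) has_vector_derivative spin n g E X S T) (at 0)"
  shows "\<forall>M\<in>carrier_mat g g. det M \<noteq> 0 \<longrightarrow>
           (\<forall>S\<in>Pow {..<2*n*g}. \<forall>T\<in>Pow {..<2*n*g}.
              \<rho> (gl_emb g M) S T = det M ^ n * rho0 n g M S T)"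
proof -
  interpret spin_representation n g E \<rho>
    using E_dim E_nondeg rho_one rho_hom rho_diff by unfold_locales auto
  show ?thesis
  proof (intro ballI impI)
    fix M :: "complex mat" and S T assume "M \<in> carrier_mat g g" "det M \<noteq> 0" "S \<in> Pow {..<2*n*g}" "T \<in> Pow {..<2*n*g}"
    then show "\<rho> (gl_emb g M) S T = det M ^ n * rho0 n g M S T"
      using rho_agrees_invertible unfolding rho_agrees_def det_rho0_def by blast
  qed
qed

end
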